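(* Let $\Theta=(-1/2,\infty)\times\mathbb{R}\times(0,\infty)$ and $\theta_0\in\Theta$. Then there exist $\dot\ell\in L_2(P_{\theta_0})$ and $\varepsilon_0>0$ such that for every $0<\varepsilon<\varepsilon_0$, \[|\ell_{\theta_1}(x)-\ell_{\theta_2}(x)|\le\dot\ell(x)\,\|\theta_1-\theta_2\|\quad\text{for all }x\in\bar S(2\varepsilon)\text{ and all }\theta_1,\theta_2\in U_\varepsilon(\theta_0).\] The same holds when $\Theta$ is replaced by any compact subset of $(-1/2,\infty)\times\mathbb{R}\times(0,\infty)$ containing $\theta_0$ in its interior.
   Context: $P_\theta$, $\theta=(\gamma,\mu,\sigma)$, is the GEV distribution with Lebesgue density $p_\theta(x)=\sigma^{-1}e^{-u}u^{\gamma+1}\mathbf 1(1+\gamma z>0)$, $z=(x-\mu)/\sigma$, $u=(1+\gamma z)^{-1/\gamma}$ for $\gamma\ne0$, $u=e^{-z}$ for $\gamma=0$; $\ell_\theta=\log p_\theta$. Support $S_\theta=\{x:\sigma+\gamma(x-\mu)>0\}$. $U_\varepsilon(\theta_0)=\{\theta\in\Theta:\|\theta-\theta_0\|<\varepsilon\}$ and $\bar S(\varepsilon)=\bigcap_{\theta\in U_\varepsilon(\theta_0)}S_\theta$ (these depend on the parameter set $\Theta$ used). *)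

theory Defs
  imports "HOL-Probability.Probability"
begin

text \<open>Parameters theta = (gamma, mu, sigma) :: real \<times> real \<times> real, with the Euclidean norm
  (the product norm on real \<times> real \<times> real is sqrt(gamma^2 + mu^2 + sigma^2)).\<close>

definition gev_u :: "real \<times> real \<times> real \<Rightarrow> real \<Rightarrow> real" where
  "gev_u \<theta> x = (case \<theta> of (\<gamma>, \<mu>, \<sigma>) \<Rightarrow>
     (let z = (x - \<mu>) / \<sigma> in
      if \<gamma> = 0 then exp (- z) else (1 + \<gamma> * z) powr (- 1 / \<gamma>)))"

definition gev_density :: "real \<times> real \<times> real \<Rightarrow> real \<Rightarrow> real" where
  "gev_density \<theta> x = (case \<theta> of (\<gamma>, \<mu>, \<sigma>) \<Rightarrow>
     (if 1 + \<gamma> * ((x - \<mu>) / \<sigma>) > 0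
      then (1 / \<sigma>) * exp (- gev_u \<theta> x) * (gev_u \<theta> x) powr (\<gamma> + 1)
      else 0))"

definition gev_loglik :: "real \<times> real \<times> real \<Rightarrow> real \<Rightarrow> real" where
  "gev_loglik \<theta> x = ln (gev_density \<theta> x)"

definition gev_measure :: "real \<times> real \<times> real \<Rightarrow> real measure" where
  "gev_measure \<theta> = density lborel (\<lambda>x. ennreal (gev_density \<theta> x))"

definition gev_support :: "real \<times> real \<times> real \<Rightarrow> real set" where
  "gev_support \<theta> = (case \<theta> of (\<gamma>, \<mu>, \<sigma>) \<Rightarrow> {x. \<sigma> + \<gamma> * (x - \<mu>) > 0})"

definition par_nbhd :: "(real \<times> real \<times> real) set \<Rightarrow> real \<times> real \<times> real \<Rightarrow> real \<Rightarrow> (real \<times> real \<times> real) set" where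
  "par_nbhd \<Theta> \<theta>0 \<epsilon> = {\<theta> \<in> \<Theta>. norm (\<theta> - \<theta>0) < \<epsilon>}"

definition common_support :: "(real \<times> real \<times> real) set \<Rightarrow> real \<times> real \<times> real \<Rightarrow> real \<Rightarrow> real set" where
  "common_support \<Theta> \<theta>0 \<epsilon> = (\<Inter>\<theta> \<in> par_nbhd \<Theta> \<theta>0 \<epsilon>. gev_support \<theta>)"

definition Theta_full :: "(real \<times> real \<times> real) set" where
  "Theta_full = {- 1 / 2 <..} \<times> UNIV \<times> {0 <..}"

end

theory Submission
  imports Defs
begin

text \<open>Write \<open>w = -ln u\<close> as a function of the shape \<open>\<gamma>\<close> and the standardised variable
  \<open>z = (x - \<mu>)/\<sigma>\<close>. Then \<open>\<ell>_\<theta>(x) = -ln \<sigma> - exp (-w) - (\<gamma> + 1) w\<close>, so it suffices to bound \<open>w\<close>,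
  \<open>exp (-w)\<close> and the derivative of \<open>w\<close> along segments of parameters; the mean value theorem does
  the rest. For \<open>x\<close> in \<open>S(2\<epsilon>)\<close>, shifting the shape or the scale of a parameter in \<open>U_\<epsilon>(\<theta>0)\<close> by
  \<open>\<epsilon>/2\<close> keeps \<open>x\<close> in the support; this bounds \<open>1 + \<gamma> z\<close> from below by a fixed multiple of
  \<open>1 + \<gamma>0 z0 = exp (\<gamma>0 w0)\<close>, uniformly in the parameter. The outcome is a Lipschitz bound
  \<open>K (u0^-a + u0^b)\<close> with \<open>a < 1/2\<close>, where \<open>u0 = exp (-w0)\<close> is standard exponential under \<open>P_\<theta>0\<close>,
  so its square is integrable by Gamma integrals. For \<open>\<gamma>0 = 0\<close> a segment may cross \<open>\<gamma> = 0\<close>, where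
  the derivative formula degenerates; such segments are split at the crossing point.\<close>

section \<open>Elementary estimates\<close>

lemma norm_triple: "norm ((a::real), (b::real), (c::real)) = sqrt (a\<^sup>2 + b\<^sup>2 + c\<^sup>2)"
  by (simp add: norm_Pair)

lemma abs_le_norm_triple:
  fixes a b c :: real
  shows "\<bar>a\<bar> \<le> norm (a,b,c)" "\<bar>b\<bar> \<le> norm (a,b,c)" "\<bar>c\<bar> \<le> norm (a,b,c)"
  unfolding norm_triple by (rule real_le_rsqrt; simp)+

lemma abs_le_norm_triple_diff:
  fixes a b c a' b' c' :: real
  assumes "norm ((a,b,c) - (a',b',c')) < e"
  shows "\<bar>a - a'\<bar> < e" "\<bar>b - b'\<bar> < e" "\<bar>c - c'\<bar> < e"
  using assms abs_le_norm_triple[where a="a - a'" and b="b - b'" and c="c - c'"] by auto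

lemma norm_triple_add_le:
  fixes g m s d1 d2 d3 :: real
  shows "norm ((g+d1, m+d2, s+d3) - \<theta>) \<le> norm ((g,m,s) - \<theta>) + norm (d1,d2,d3)"
proof -
  have "(g+d1, m+d2, s+d3) - \<theta> = ((g,m,s) - \<theta>) + (d1,d2,d3)" by simp
  thus ?thesis by (metis norm_triangle_ineq)
qed

lemma segment_ne_zero_of_same_sign:
  fixes a b t :: real
  assumes "0 < a*b" "0 \<le> t" "t \<le> 1"
  shows "b + t*(a - b) \<noteq> 0"
proof -
  have "(b + t*(a - b)) * b = (1 - t)*(b*b) + t*(a*b)" by (simp add: algebra_simps)
  moreover have "0 < (1 - t)*(b*b) + t*(a*b)"
    using assms by (cases "t = 0") (auto simp: add_nonneg_pos zero_less_mult_iff)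
  ultimately show ?thesis by auto
qed

lemma segment_zero_of_not_same_sign:
  fixes a b :: real
  assumes "\<not> 0 < a*b"
  obtains t where "0 \<le> t" "t \<le> 1" "b + t*(a - b) = 0"
proof (cases "a = b")
  case True
  thus ?thesis using assms that[of 0] by (simp add: zero_less_mult_iff not_less)
next
  case False
  define t where "t = b/(b - a)"
  have "b + t*(a - b) = 0" using False by (simp add: t_def field_simps)
  moreover have "0 \<le> t" "t \<le> 1"
    using assms False by (auto simp: t_def zero_less_mult_iff not_less divide_le_eq le_divide_eq
        zero_le_divide_iff)
  ultimately show ?thesis using that by blast
qed

lemma ln_ge_one_minus_inverse: "0 < (y::real) \<Longrightarrow> 1 - 1/y \<le> ln y"
  using ln_le_minus_one[of "1/y"] by (simp add: ln_div)

lemma abs_ln_minus_sub_one_le: "0 < (y::real) \<Longrightarrow> \<bar>ln y - (y - 1)\<bar> \<le> (y - 1)\<^sup>2 / y"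
proof -
  assume y: "0 < y"
  have "(y - 1)\<^sup>2 / y = y - 2 + 1/y" using y by (simp add: field_simps power2_eq_square)
  thus ?thesis using ln_le_minus_one[OF y] ln_ge_one_minus_inverse[OF y] by (auto simp: abs_if)
qed

lemma abs_frac_minus_ln_le: "0 < (y::real) \<Longrightarrow> \<bar>(y - 1)/y - ln y\<bar> \<le> (y - 1)\<^sup>2 / y"
proof -
  assume y: "0 < y"
  have "(y - 1)/y = 1 - 1/y" "(y - 1)\<^sup>2 / y = y - 2 + 1/y"
    using y by (simp_all add: field_simps power2_eq_square)
  thus ?thesis using ln_le_minus_one[OF y] ln_ge_one_minus_inverse[OF y] by (auto simp: abs_if)
qed

lemma abs_exp_diff_le: "\<bar>exp (a::real) - exp b\<bar> \<le> max (exp a) (exp b) * \<bar>a - b\<bar>"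
proof -
  have key: "exp u - exp v \<le> exp u * (u - v)" if "v \<le> u" for u v :: real
  proof -
    have "exp u * (1 + (v - u)) \<le> exp u * exp (v - u)"
      using exp_ge_add_one_self[of "v - u"] by (intro mult_left_mono) auto
    thus ?thesis by (simp add: exp_diff algebra_simps)
  qed
  show ?thesis
    using key[of b a] key[of a b] by (cases "b \<le> a") (auto simp: max_def abs_minus_commute)
qed

lemma abs_ln_diff_le:
  assumes "0 < (a::real)" "0 < b"
  shows "\<bar>ln a - ln b\<bar> \<le> \<bar>a - b\<bar> / min a b"
proof -
  have key: "ln u - ln v \<le> \<bar>u - v\<bar> / min a b" if "0 < u" "0 < v" "v = a \<or> v = b" for u v
  proof -
    have "ln u - ln v \<le> (u - v)/v"
      using ln_le_minus_one[of "u/v"] that by (simp add: ln_div diff_divide_distrib)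
    also have "\<dots> \<le> \<bar>u - v\<bar>/v" using that by (simp add: divide_right_mono)
    also have "\<dots> \<le> \<bar>u - v\<bar>/min a b" using that assms by (intro divide_left_mono) auto
    finally show ?thesis .
  qed
  show ?thesis using key[of a b] key[of b a] assms by (auto simp: abs_le_iff abs_minus_commute)
qed

lemma one_plus_sq_le_exp:
  fixes a y :: real
  assumes a: "0 < a" "a \<le> 2" and y: "0 \<le> y"
  shows "(1 + y)\<^sup>2 \<le> (4/a\<^sup>2) * exp (a*y)"
proof -
  have "(2/a)*(1 + a*y/2) \<le> (2/a)*exp (a*y/2)"
    using exp_ge_add_one_self[of "a*y/2"] a by (intro mult_left_mono) auto
  moreover have "(2/a)*(1 + a*y/2) = 2/a + y" "1 \<le> 2/a" using a by (simp_all add: field_simps)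
  ultimately have "1 + y \<le> (2/a)*exp (a*y/2)" by linarith
  hence "(1 + y)\<^sup>2 \<le> ((2/a)*exp (a*y/2))\<^sup>2" using y by (intro power_mono) auto
  also have "\<dots> = (4/a\<^sup>2) * exp (a*y)"
    by (simp add: power_mult_distrib power_divide power2_eq_square exp_add[symmetric])
  finally show ?thesis .
qed

lemma le_coeff_sum_times_envelope:
  fixes X a b d f v E :: real
  assumes "0 \<le> a" "0 \<le> b" "0 \<le> d" "0 \<le> f" "0 < E"
    and X: "X \<le> a + b*\<bar>v\<bar> + d*(1 + \<bar>v\<bar>)\<^sup>2 + f*E"
  shows "X \<le> (a + b + d + f) * ((1 + \<bar>v\<bar>)\<^sup>2 + E)"
proof -
  define P where "P = (1 + \<bar>v\<bar>)\<^sup>2 + E"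
  have sq: "1 + \<bar>v\<bar> \<le> (1 + \<bar>v\<bar>)\<^sup>2"
    using mult_left_mono[of 1 "1 + \<bar>v\<bar>" "1 + \<bar>v\<bar>"] by (simp add: power2_eq_square)
  hence "1 \<le> P" "\<bar>v\<bar> \<le> P" "(1 + \<bar>v\<bar>)\<^sup>2 \<le> P" "E \<le> P" using assms(5) by (auto simp: P_def)
  hence "a \<le> a*P" "b*\<bar>v\<bar> \<le> b*P" "d*(1 + \<bar>v\<bar>)\<^sup>2 \<le> d*P" "f*E \<le> f*P"
    using assms(1-4) mult_left_mono by fastforce+
  thus ?thesis using X by (simp add: P_def algebra_simps)
qed

text \<open>Here \<open>a < 1/2\<close> exactly because \<open>g0 > -1/2\<close>; this is what makes the final Lipschitz
  constant square integrable.\<close>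

lemma envelope_le_exp_sum:
  fixes g0 \<beta> v :: real
  assumes g0: "-1/2 < g0" and b: "0 \<le> \<beta>"
  defines "a \<equiv> (1 + 2*max 0 (- g0))/4" and "bb \<equiv> \<beta> + \<bar>g0\<bar> + 1"
  shows "exp (\<beta> * max 0 (- v)) * ((1+\<bar>v\<bar>)\<^sup>2 + exp (- g0 * v)) \<le> (4/a\<^sup>2 + 5) * (exp (a* v) + exp (- bb* v))"
proof -
  have a0: "0 < a" "a \<le> 2" "max 0 (- g0) \<le> a" using g0 by (auto simp: a_def)
  have k: "0 < 4/a\<^sup>2" using a0 by simp
  show ?thesis
  proof (cases "0 \<le> v")
    case True
    have p1: "(1+\<bar>v\<bar>)\<^sup>2 \<le> (4/a\<^sup>2)*exp (a* v)" using one_plus_sq_le_exp[OF a0(1,2), of v] True by simp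
    have p2: "exp (- g0 * v) \<le> exp (a* v)"
    proof -
      have "- g0 * v \<le> max 0 (- g0) * v" using True by (intro mult_right_mono) auto
      also have "\<dots> \<le> a * v" using True a0 by (intro mult_right_mono) auto
      finally show ?thesis by simp
    qed
    have p3: "(4/a\<^sup>2 + 1)*exp (a* v) = (4/a\<^sup>2)*exp (a* v) + exp (a* v)" by (simp add: algebra_simps)
    have "(1+\<bar>v\<bar>)\<^sup>2 + exp (- g0 * v) \<le> (4/a\<^sup>2 + 1)*exp (a* v)" using p1 p2 p3 by linarith
    also have "\<dots> \<le> (4/a\<^sup>2 + 5) * (exp (a* v) + exp (- bb* v))"
      using k by (intro mult_mono) auto
    finally show ?thesis using True by simp
  next
    case False
    define y where "y = - v"
    have y: "0 < y" using False by (simp add: y_def)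
    have "(1+\<bar>v\<bar>)\<^sup>2 \<le> (4/1\<^sup>2)*exp (1*y)" using one_plus_sq_le_exp[of 1 y] y by (simp add: y_def)
    hence p: "(1+\<bar>v\<bar>)\<^sup>2 \<le> 4*exp y" by simp
    have q: "exp (- g0 * v) \<le> exp (\<bar>g0\<bar> * y)"
    proof -
      have "- g0 * v = g0 * y" by (simp add: y_def)
      also have "\<dots> \<le> \<bar>g0\<bar> * y" using y by (intro mult_right_mono) auto
      finally show ?thesis by simp
    qed
    have "exp (\<beta> * max 0 (- v)) * ((1+\<bar>v\<bar>)\<^sup>2 + exp (- g0 * v)) \<le> exp (\<beta> * y) * (4*exp y + exp (\<bar>g0\<bar> * y))"
      using p q y by (intro mult_mono add_mono) (auto simp: y_def)
    also have "\<dots> = 4*exp ((\<beta>+1)*y) + exp ((\<beta>+\<bar>g0\<bar>)*y)" by (simp add: algebra_simps exp_add[symmetric])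
    also have "\<dots> \<le> 4*exp (bb*y) + exp (bb*y)"
    proof -
      have "(\<beta>+1)*y \<le> bb*y" using y by (intro mult_right_mono) (auto simp: bb_def)
      moreover have "(\<beta>+\<bar>g0\<bar>)*y \<le> bb*y" using y by (intro mult_right_mono) (auto simp: bb_def)
      ultimately have "exp ((\<beta>+1)*y) \<le> exp (bb*y)" "exp ((\<beta>+\<bar>g0\<bar>)*y) \<le> exp (bb*y)" by simp_all
      thus ?thesis by linarith
    qed
    also have "\<dots> = 5 * exp (- bb* v)" by (simp add: y_def)
    also have "\<dots> \<le> (4/a\<^sup>2 + 5) * (exp (a* v) + exp (- bb* v))"
      using k by (intro mult_mono) auto
    finally show ?thesis .
  qed
qed

section \<open>The exponent \<open>w = -ln u\<close>\<close>

text \<open>\<open>gev_w \<gamma> z = -ln u\<close> for the standardised variable \<open>z = (x - \<mu>)/\<sigma>\<close>. Writing the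
  log-likelihood through it turns every parameter dependence into one smooth function of
  \<open>(\<gamma>, z)\<close>, including across \<open>\<gamma> = 0\<close>.\<close>

definition gev_w :: "real \<Rightarrow> real \<Rightarrow> real" where
  "gev_w g z = (if g = 0 then z else ln (1 + g*z) / g)"

lemma gev_w_between:
  assumes q: "0 < 1 + g*z"
  shows "min z (z/(1 + g*z)) \<le> gev_w g z" "gev_w g z \<le> max z (z/(1 + g*z))"
proof -
  let ?q = "1 + g*z"
  have up: "ln ?q \<le> g*z" using ln_le_minus_one[OF q] by simp
  have low: "g*z/?q \<le> ln ?q" using ln_ge_one_minus_inverse[OF q] q by (simp add: field_simps)
  consider "g = 0" | "g > 0" | "g < 0" by linarith
  hence "min z (z/?q) \<le> gev_w g z \<and> gev_w g z \<le> max z (z/?q)"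
  proof cases
    case 2
    have "ln ?q / g \<le> z" using up 2 by (simp add: divide_le_eq mult.commute)
    moreover have "z/?q \<le> ln ?q / g" using low 2 q by (simp add: le_divide_eq field_simps)
    ultimately show ?thesis using 2 by (simp add: gev_w_def)
  next
    case 3
    have "z \<le> ln ?q / g" using up 3 by (simp add: le_divide_eq mult.commute)
    moreover have "ln ?q / g \<le> z/?q" using low 3 q by (simp add: divide_le_eq field_simps)
    ultimately show ?thesis using 3 by (simp add: gev_w_def)
  qed (simp add: gev_w_def)
  thus "min z (z/?q) \<le> gev_w g z" "gev_w g z \<le> max z (z/?q)" by auto
qed

lemma abs_gev_w_minus_le:
  assumes q: "0 < 1 + g*z"
  shows "\<bar>gev_w g z - z\<bar> \<le> \<bar>g\<bar> * z\<^sup>2 / (1 + g*z)"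
proof (cases "g = 0")
  case False
  have "\<bar>gev_w g z - z\<bar> = \<bar>ln (1 + g*z) - g*z\<bar> / \<bar>g\<bar>"
    using False by (simp add: gev_w_def field_simps)
  also have "\<dots> \<le> ((g*z)\<^sup>2 / (1 + g*z)) / \<bar>g\<bar>"
    using abs_ln_minus_sub_one_le[OF q] by (intro divide_right_mono) auto
  also have "\<dots> = \<bar>g\<bar> * z\<^sup>2 / (1 + g*z)"
  proof -
    have "(g*z)\<^sup>2 = \<bar>g\<bar> * (\<bar>g\<bar> * z\<^sup>2)"
      by (simp add: power2_eq_square abs_mult_self_eq mult.assoc[symmetric])
    thus ?thesis using False by simp
  qed
  finally show ?thesis .
qed (simp add: gev_w_def)

text \<open>For \<open>g \<noteq> 0\<close>, the partial derivative of \<open>gev_w g z\<close> in \<open>g\<close>.\<close>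

definition gev_w_dshape :: "real \<Rightarrow> real \<Rightarrow> real" where
  "gev_w_dshape g z = z / ((1 + g*z)*g) - ln (1 + g*z) / g\<^sup>2"

lemma gev_w_dshape_eq:
  assumes "g \<noteq> 0" "0 < 1 + g*z"
  shows "gev_w_dshape g z = (((1 + g*z) - 1)/(1 + g*z) - ln (1 + g*z)) / g\<^sup>2"
proof -
  define Q where "Q = 1 + g*z"
  have Q: "Q \<noteq> 0" using assms(2) by (simp add: Q_def)
  have "z = (Q - 1)/g" using assms(1) by (simp add: Q_def)
  hence "z / (Q*g) = (Q - 1)/Q/g\<^sup>2" using assms(1) Q by (simp add: field_simps power2_eq_square)
  thus ?thesis unfolding gev_w_dshape_def Q_def[symmetric] by (simp add: diff_divide_distrib)
qed

lemma abs_gev_w_dshape_le_sq: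
  assumes g: "g \<noteq> 0" and q: "0 < 1 + g*z"
  shows "\<bar>gev_w_dshape g z\<bar> \<le> z\<^sup>2/(1 + g*z)"
proof -
  have "\<bar>gev_w_dshape g z\<bar> = \<bar>((1 + g*z) - 1)/(1 + g*z) - ln (1 + g*z)\<bar> / g\<^sup>2"
    unfolding gev_w_dshape_eq[OF g q] by simp
  also have "\<dots> \<le> (((1 + g*z) - 1)\<^sup>2/(1 + g*z)) / g\<^sup>2"
    using abs_frac_minus_ln_le[OF q] by (intro divide_right_mono) auto
  also have "\<dots> = z\<^sup>2/(1 + g*z)" using g by (simp add: power2_eq_square)
  finally show ?thesis .
qed

lemma abs_gev_w_dshape_le_ln:
  assumes g: "g \<noteq> 0" and q: "0 < 1 + g*z"
  shows "\<bar>gev_w_dshape g z\<bar> \<le> (\<bar>ln (1 + g*z)\<bar> + 1 + 1/(1 + g*z)) / g\<^sup>2"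
proof -
  have "((1 + g*z) - 1)/(1 + g*z) = 1 - 1/(1 + g*z)" using q by (simp add: field_simps)
  hence "\<bar>((1 + g*z) - 1)/(1 + g*z)\<bar> \<le> 1 + 1/(1 + g*z)" using q by (simp add: abs_le_iff)
  hence "\<bar>((1 + g*z) - 1)/(1 + g*z) - ln (1 + g*z)\<bar> \<le> \<bar>ln (1 + g*z)\<bar> + 1 + 1/(1 + g*z)"
    by linarith
  hence "\<bar>((1 + g*z) - 1)/(1 + g*z) - ln (1 + g*z)\<bar> / g\<^sup>2
      \<le> (\<bar>ln (1 + g*z)\<bar> + 1 + 1/(1 + g*z)) / g\<^sup>2"
    by (intro divide_right_mono) auto
  thus ?thesis unfolding gev_w_dshape_eq[OF g q] by simp
qed

lemma has_real_derivative_gev_w_comp: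
  fixes G Z :: "real \<Rightarrow> real"
  assumes "(G has_real_derivative G') (at t)" "(Z has_real_derivative Z') (at t)"
    and "G t \<noteq> 0" "0 < 1 + G t * Z t"
  shows "((\<lambda>t. ln (1 + G t * Z t) / G t) has_real_derivative
           G' * gev_w_dshape (G t) (Z t) + Z' / (1 + G t * Z t)) (at t)"
proof -
  have "((\<lambda>t. ln (1 + G t * Z t)) has_real_derivative (G' * Z t + G t * Z') / (1 + G t * Z t)) (at t)"
    using assms by (auto intro!: derivative_eq_intros simp: field_simps)
  from DERIV_divide[OF this assms(1,3)]
  have "((\<lambda>t. ln (1 + G t * Z t) / G t) has_real_derivative
     ((G' * Z t + G t * Z') / (1 + G t * Z t) * G t - ln (1 + G t * Z t) * G') / (G t * G t)) (at t)" .
  moreover have "((G' * z + a * Z') / (1 + a * z) * a - L * G') / (a * a)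
      = G' * (z / ((1 + a*z)*a) - L / a\<^sup>2) + Z' / (1 + a * z)" if "a \<noteq> 0" "1 + a*z \<noteq> 0" for a z L
  proof -
    have "((G' * z + a * Z') / (1 + a * z) * a - L * G') / (a * a)
        = G' * z / ((1 + a*z)*a) + Z' / (1 + a * z) - G' * L / a\<^sup>2"
      using that by (simp add: diff_divide_distrib add_divide_distrib power2_eq_square)
    thus ?thesis by (simp add: algebra_simps)
  qed
  ultimately show ?thesis using assms(3,4) by (simp add: gev_w_dshape_def)
qed

lemma has_real_derivative_standardised_segment:
  fixes x m dm s ds t :: real
  assumes "0 < s + t*ds"
  shows "((\<lambda>t. (x - (m + t*dm))/(s + t*ds)) has_real_derivative
     (- dm - (x - (m + t*dm))/(s + t*ds) * ds)/(s + t*ds)) (at t)"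
proof -
  have "((\<lambda>t. (x - (m + t*dm))/(s + t*ds)) has_real_derivative
     ((- dm) * (s + t*ds) - (x - (m + t*dm)) * ds)/((s + t*ds) * (s + t*ds))) (at t)"
    using assms by (auto intro!: derivative_eq_intros)
  moreover have "((- dm) * (s + t*ds) - (x - (m + t*dm)) * ds)/((s + t*ds) * (s + t*ds))
      = (- dm - (x - (m + t*dm))/(s + t*ds) * ds)/(s + t*ds)"
    using assms by (simp add: field_simps)
  ultimately show ?thesis by simp
qed

text \<open>\<open>B\<close> bounds the speed of \<open>w\<close> along the segment per unit of parameter distance; the
  segment has to stay off \<open>\<gamma> = 0\<close>, where \<open>gev_w_dshape\<close> is not the partial derivative.\<close>

lemma gev_w_segment_lipschitz:
  fixes g1 m1 s1 g2 m2 s2 x B :: real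
  defines "G \<equiv> \<lambda>t. g2 + t*(g1 - g2)" and "S \<equiv> \<lambda>t. s2 + t*(s1 - s2)"
    and "Z \<equiv> \<lambda>t. (x - (m2 + t*(m1 - m2)))/(s2 + t*(s1 - s2))"
  assumes pos: "\<And>t. 0 \<le> t \<Longrightarrow> t \<le> 1 \<Longrightarrow> 0 < S t \<and> 0 < 1 + G t * Z t \<and> G t \<noteq> 0"
    and bnd: "\<And>t. 0 \<le> t \<Longrightarrow> t \<le> 1 \<Longrightarrow>
        \<bar>gev_w_dshape (G t) (Z t)\<bar> + (1 + \<bar>Z t\<bar>) / (S t * (1 + G t * Z t)) \<le> B"
  shows "\<bar>gev_w g1 ((x - m1)/s1) - gev_w g2 ((x - m2)/s2)\<bar> \<le> B * norm ((g1,m1,s1) - (g2,m2,s2))"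
proof -
  define dg dm ds where "dg = g1 - g2" and "dm = m1 - m2" and "ds = s1 - s2"
  define f where "f = (\<lambda>t. ln (1 + G t * Z t) / G t)"
  define f' where "f' = (\<lambda>t. dg * gev_w_dshape (G t) (Z t) + ((- dm - Z t*ds)/S t) / (1 + G t * Z t))"
  have "DERIV f t :> f' t" if "0 \<le> t" "t \<le> 1" for t
  proof -
    have "(Z has_real_derivative (- dm - Z t*ds)/S t) (at t)"
      using pos[OF that] has_real_derivative_standardised_segment[of s2 t ds x m2 dm]
      by (simp add: Z_def S_def dm_def ds_def)
    moreover have "(G has_real_derivative dg) (at t)"
      unfolding G_def dg_def by (auto intro!: derivative_eq_intros)
    ultimately show ?thesis
      unfolding f_def f'_def using pos[OF that] by (intro has_real_derivative_gev_w_comp) auto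
  qed
  then obtain t where t: "0 < t" "t < 1" "f 1 - f 0 = f' t"
    using MVT2[of 0 1 f f'] by auto
  have "f 1 = gev_w g1 ((x - m1)/s1)" "f 0 = gev_w g2 ((x - m2)/s2)"
    using pos[of 0] pos[of 1] by (simp_all add: f_def gev_w_def G_def Z_def)
  define N where "N = norm ((g1,m1,s1) - (g2,m2,s2))"
  have Nb: "\<bar>dg\<bar> \<le> N" "\<bar>dm\<bar> \<le> N" "\<bar>ds\<bar> \<le> N"
    using abs_le_norm_triple[where a=dg and b=dm and c=ds] by (auto simp: N_def dg_def dm_def ds_def)
  define Q where "Q = 1 + G t * Z t"
  have pt: "0 < S t" "0 < Q" using pos[of t] t by (auto simp: Q_def)
  define A where "A = gev_w_dshape (G t) (Z t)"
  have "\<bar>- dm - Z t*ds\<bar> \<le> N*(1 + \<bar>Z t\<bar>)"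
    using Nb abs_mult[of "Z t" ds] mult_left_mono[OF Nb(3), of "\<bar>Z t\<bar>"]
    by (simp add: algebra_simps) arith
  hence "\<bar>((- dm - Z t*ds)/S t) / Q\<bar> \<le> N * ((1 + \<bar>Z t\<bar>) / (S t * Q))"
    using pt by (simp add: abs_divide divide_right_mono)
  moreover have "\<bar>dg * A\<bar> \<le> N * \<bar>A\<bar>"
    using Nb(1) by (simp add: abs_mult mult_right_mono)
  moreover have "\<bar>f' t\<bar> \<le> \<bar>dg * A\<bar> + \<bar>((- dm - Z t*ds)/S t) / Q\<bar>"
    unfolding f'_def A_def Q_def by (rule abs_triangle_ineq)
  ultimately have "\<bar>f' t\<bar> \<le> N * (\<bar>A\<bar> + (1 + \<bar>Z t\<bar>) / (S t * Q))"
    by (simp add: distrib_left)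
  also have "\<dots> \<le> N * B" using bnd[of t] t by (intro mult_left_mono) (auto simp: N_def Q_def A_def)
  finally show ?thesis using t(3) \<open>f 1 = _\<close> \<open>f 0 = _\<close> by (simp add: N_def mult.commute)
qed

lemma gev_u_eq_exp_gev_w:
  assumes s: "0 < s" and q: "0 < 1 + g*((x - m)/s)"
  shows "gev_u (g,m,s) x = exp (- gev_w g ((x - m)/s))"
proof (cases "g = 0")
  case False
  have "(1 + g*((x - m)/s)) powr (-1/g) = exp (-1/g * ln (1 + g*((x - m)/s)))"
    using q by (simp add: powr_def)
  thus ?thesis using False by (simp add: gev_u_def gev_w_def Let_def)
qed (simp add: gev_u_def gev_w_def)

lemma gev_density_eq:
  assumes s: "0 < s" and q: "0 < 1 + g*((x - m)/s)"
  shows "gev_density (g,m,s) x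
    = (1/s) * exp (- exp (- gev_w g ((x - m)/s))) * exp (- (g + 1) * gev_w g ((x - m)/s))"
proof -
  have "exp (- w) powr (g + 1) = exp (- (g + 1) * w)" for w by (simp add: powr_def algebra_simps)
  thus ?thesis using q gev_u_eq_exp_gev_w[OF s q] by (simp add: gev_density_def)
qed

lemma gev_loglik_eq:
  assumes s: "0 < s" and q: "0 < 1 + g*((x - m)/s)"
  shows "gev_loglik (g,m,s) x = - ln s - exp (- gev_w g ((x - m)/s)) - (g + 1) * gev_w g ((x - m)/s)"
  using s unfolding gev_loglik_def gev_density_eq[OF s q]
  by (simp add: ln_mult ln_div algebra_simps)

lemma abs_standardised_diff_le:
  fixes x g m s g' m' s' :: real
  assumes "0 < s" "0 < s'"
  shows "\<bar>(x - m)/s - (x - m')/s'\<bar> \<le> norm ((g,m,s) - (g',m',s')) * (1 + \<bar>(x - m')/s'\<bar>) * (1/s)"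
proof -
  define N where "N = norm ((g,m,s) - (g',m',s'))"
  have N: "\<bar>m' - m\<bar> \<le> N" "\<bar>s' - s\<bar> \<le> N"
    using abs_le_norm_triple[where a="g - g'" and b="m - m'" and c="s - s'"]
    by (auto simp: N_def abs_minus_commute)
  have "(x - m)/s - (x - m')/s' = ((m' - m) + (x - m')/s' * (s' - s))/s"
    using assms by (simp add: field_simps)
  hence "\<bar>(x - m)/s - (x - m')/s'\<bar> = \<bar>(m' - m) + (x - m')/s' * (s' - s)\<bar> * (1/s)"
    using assms by (simp add: abs_divide)
  also have "\<dots> \<le> N * (1 + \<bar>(x - m')/s'\<bar>) * (1/s)"
  proof (rule mult_right_mono)
    have "\<bar>(m' - m) + (x - m')/s' * (s' - s)\<bar> \<le> \<bar>m' - m\<bar> + \<bar>(x - m')/s'\<bar> * \<bar>s' - s\<bar>"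
      by (metis abs_mult abs_triangle_ineq)
    also have "\<dots> \<le> N + \<bar>(x - m')/s'\<bar> * N" using N by (intro add_mono mult_left_mono) auto
    finally show "\<bar>(m' - m) + (x - m')/s' * (s' - s)\<bar> \<le> N * (1 + \<bar>(x - m')/s'\<bar>)"
      by (simp add: algebra_simps)
  qed (use assms in simp)
  finally show ?thesis by (simp add: N_def)
qed

text \<open>If \<open>x\<close> lies in the support of every parameter within \<open>2 e\<close> of \<open>(g0, m0, s0)\<close>, then
  moving the shape or the scale of any parameter within \<open>e\<close> of \<open>(g0, m0, s0)\<close> by \<open>e/2\<close> keeps
  \<open>x\<close> in the support; this gives a margin for \<open>s + g (x - m)\<close>, uniform in the parameter.\<close>

lemma support_margin:
  fixes g0 m0 s0 g m s x e :: real
  assumes s0: "0 < s0" and e: "0 < e" "e \<le> 1" "e \<le> s0/4"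
    and hx: "\<forall>\<theta>'. norm (\<theta>' - (g0,m0,s0)) < 2*e \<longrightarrow> x \<in> gev_support \<theta>'"
    and h\<theta>: "norm ((g,m,s) - (g0,m0,s0)) < e"
  shows "0 < s0 + g0*(x - m0)" and "(s0 + g0*(x - m0)) / (9 + 2*\<bar>g0\<bar>) \<le> s + g*(x - m)"
proof -
  have cb: "\<bar>g - g0\<bar> < e" "\<bar>m - m0\<bar> < e" "\<bar>s - s0\<bar> < e"
    using abs_le_norm_triple_diff[OF h\<theta>] by auto
  show "0 < s0 + g0*(x - m0)" using hx[rule_format, of "(g0,m0,s0)"] e by (simp add: gev_support_def)
  have shift: "x \<in> gev_support (g + d1, m, s + d3)" if "\<bar>d1\<bar> = e/2 \<and> d3 = 0 \<or> d1 = 0 \<and> d3 = - e/2"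
    for d1 d3
  proof -
    have "norm (d1, 0::real, d3) = e/2" using that e(1) by (auto simp: norm_triple)
    hence "norm ((g + d1, m + 0, s + d3) - (g0,m0,s0)) < 2*e"
      using norm_triple_add_le[of g d1 m 0 s d3 "(g0,m0,s0)"] h\<theta> e(1) by linarith
    thus ?thesis using hx by simp
  qed
  define sg where "sg = (if x \<ge> m then 1 else -1::real)"
  have "x \<in> gev_support (g + (- e/2 * sg), m, s + 0)" using shift[of "- e/2 * sg" 0] e(1)
    by (simp add: sg_def abs_mult)
  hence "0 < s + (g - e/2 * sg)*(x - m)" by (simp add: gev_support_def)
  moreover have "sg * (x - m) = \<bar>x - m\<bar>" by (simp add: sg_def)
  ultimately have S1: "e/2 * \<bar>x - m\<bar> < s + g*(x - m)" by (simp add: algebra_simps)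
  have "x \<in> gev_support (g + 0, m, s + - e/2)" using shift[of 0 "- e/2"] by simp
  hence S2: "e/2 < s + g*(x - m)" by (simp add: gev_support_def algebra_simps)
  have "s0 + g0*(x - m0) - (s + g*(x - m)) = (s0 - s) + (g0 - g)*(x - m0) + g*(m - m0)"
    by (simp add: algebra_simps)
  moreover have "\<bar>(g0 - g)*(x - m0)\<bar> \<le> e * \<bar>x - m\<bar> + e"
  proof -
    have "\<bar>(g0 - g)*(x - m0)\<bar> \<le> e * \<bar>x - m0\<bar>"
      using cb(1) by (simp add: abs_mult mult_right_mono abs_minus_commute)
    also have "\<dots> \<le> e * (\<bar>x - m\<bar> + 1)" using cb(2) e by (intro mult_left_mono) auto
    finally show ?thesis by (simp add: algebra_simps)
  qed
  moreover have "\<bar>g*(m - m0)\<bar> \<le> (\<bar>g0\<bar> + 1) * e"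
    using cb(1,2) e by (simp add: abs_mult mult_mono)
  ultimately have "s0 + g0*(x - m0) \<le> (s + g*(x - m)) + e + (e * \<bar>x - m\<bar> + e) + (\<bar>g0\<bar> + 1)*e"
    using cb(3) by (auto simp: abs_le_iff)
  moreover have "(\<bar>g0\<bar> + 1)*e \<le> (\<bar>g0\<bar> + 1)*(2*(s + g*(x - m)))"
    using S2 by (intro mult_left_mono) auto
  ultimately have "s0 + g0*(x - m0) \<le> (s + g*(x - m)) * (9 + 2*\<bar>g0\<bar>)"
    using S1 S2 by (simp add: algebra_simps)
  thus "(s0 + g0*(x - m0)) / (9 + 2*\<bar>g0\<bar>) \<le> s + g*(x - m)" by (simp add: divide_le_eq)
qed

section \<open>Square integrability under \<open>P_\<theta>0\<close>\<close>

definition gev_z_of_u :: "real \<Rightarrow> real \<Rightarrow> real" where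
  "gev_z_of_u g y = (if g = 0 then - ln y else (y powr (- g) - 1)/g)"

lemma has_real_derivative_gev_z_of_u:
  assumes y: "0 < y"
  shows "((\<lambda>y. m0 + s0 * gev_z_of_u g y) has_real_derivative (- s0 * y powr (- g - 1))) (at y)"
proof (cases "g = 0")
  case True
  have "((\<lambda>y. m0 + s0 * (- ln y)) has_real_derivative (0 + s0 * (- (1/y)))) (at y)"
    using y by (auto intro!: derivative_eq_intros)
  moreover have "y powr (-1) = 1/y" using y by (simp add: powr_minus_divide)
  ultimately show ?thesis using True by (simp add: gev_z_of_u_def)
next
  case False
  have "((\<lambda>y. m0 + s0 * ((y powr (- g) - 1)/g)) has_real_derivative (0 + s0 * ((- g * y powr (- g - 1) - 0)/g))) (at y)"
    using y by (auto intro!: derivative_eq_intros has_real_derivative_powr)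
  thus ?thesis using False by (simp add: gev_z_of_u_def)
qed

lemma gev_z_of_u_strict_antimono:
  assumes "0 < y1" "y1 < y2"
  shows "gev_z_of_u g y2 < gev_z_of_u g y1"
proof -
  consider "g = 0" | "g > 0" | "g < 0" by linarith
  thus ?thesis
  proof cases
    case 1 thus ?thesis using assms by (simp add: gev_z_of_u_def)
  next
    case 2
    have "y2 powr (- g) < y1 powr (- g)" using assms 2 by (intro powr_less_mono2_neg) auto
    thus ?thesis using 2 by (simp add: gev_z_of_u_def divide_strict_right_mono)
  next
    case 3
    have "y1 powr (- g) < y2 powr (- g)" using assms 3 by (intro powr_less_mono2) auto
    thus ?thesis using 3 by (simp add: gev_z_of_u_def divide_strict_right_mono_neg)
  qed
qed

lemma inj_on_gev_z_of_u:
  assumes "0 < s0"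
  shows "inj_on (\<lambda>y. m0 + s0 * gev_z_of_u g y) {0<..}"
proof (rule inj_onI, rule ccontr)
  fix y1 y2 :: real
  assume "y1 \<in> {0<..}" "y2 \<in> {0<..}" "m0 + s0 * gev_z_of_u g y1 = m0 + s0 * gev_z_of_u g y2" "y1 \<noteq> y2"
  thus False
    using gev_z_of_u_strict_antimono[of y1 y2 g] gev_z_of_u_strict_antimono[of y2 y1 g] assms
    by (auto simp: neq_iff)
qed

lemma gev_w_gev_z_of_u:
  fixes g m0 s0 y :: real
  assumes y: "0 < y" and s0: "0 < s0"
  defines "x \<equiv> m0 + s0 * gev_z_of_u g y"
  shows "0 < 1 + g*((x - m0)/s0)" "gev_w g ((x - m0)/s0) = - ln y"
proof -
  have z: "(x - m0)/s0 = gev_z_of_u g y" using s0 by (simp add: x_def)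
  show "0 < 1 + g*((x - m0)/s0)" unfolding z using y by (simp add: gev_z_of_u_def)
  show "gev_w g ((x - m0)/s0) = - ln y" unfolding z using y by (simp add: gev_z_of_u_def gev_w_def ln_powr)
qed

lemma gev_z_of_u_gev_w:
  assumes s0: "0 < s0" and q: "0 < 1 + g*((x - m0)/s0)"
  shows "x = m0 + s0 * gev_z_of_u g (exp (- gev_w g ((x - m0)/s0)))"
proof (cases "g = 0")
  case True thus ?thesis using s0 by (simp add: gev_z_of_u_def gev_w_def)
next
  case False
  have "exp (- gev_w g ((x - m0)/s0)) powr (- g) = exp (ln (1 + g*((x - m0)/s0)))"
    using False by (simp add: gev_w_def powr_def)
  also have "\<dots> = 1 + g*((x - m0)/s0)" using q by simp
  finally show ?thesis using False s0 by (simp add: gev_z_of_u_def)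
qed

lemma borel_measurable_gev_u: "(\<lambda>x. gev_u (g0,m0,s0) x) \<in> borel_measurable borel"
  unfolding gev_u_def by (simp add: Let_def) measurable

lemma borel_measurable_gev_density: "(\<lambda>x. gev_density (g0,m0,s0) x) \<in> borel_measurable borel"
  unfolding gev_density_def using borel_measurable_gev_u by simp measurable

lemma gev_density_nonneg: "0 < s0 \<Longrightarrow> 0 \<le> gev_density (g0,m0,s0) x"
  unfolding gev_density_def by auto

lemma gamma_kernel_absolutely_integrable:
  assumes "0 < c"
  shows "(\<lambda>t::real. t powr (c - 1) / exp t) absolutely_integrable_on {0<..}"
proof -
  have "(\<lambda>t::real. t powr (c - 1) / exp t) integrable_on {0..}"
    using Gamma_integral_real[OF assms] by (rule has_integral_integrable)
  hence "(\<lambda>t::real. t powr (c - 1) / exp t) absolutely_integrable_on {0..}"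
    by (rule nonnegative_absolutely_integrable_1) simp
  thus ?thesis by (rule set_integrable_subset) auto
qed

text \<open>Substituting \<open>x = m0 + s0 * gev_z_of_u g0 y\<close>, i.e. \<open>y = u(x)\<close>, turns the GEV density into the
  standard exponential density: \<open>u(X)\<close> is \<open>Exp(1)\<close>-distributed.\<close>

lemma integrable_gev_measure_by_u:
  fixes F :: "real \<Rightarrow> real"
  assumes s0: "0 < s0" and F: "F \<in> borel_measurable borel"
    and int: "(\<lambda>y. exp (- y) * F (m0 + s0 * gev_z_of_u g0 y)) absolutely_integrable_on {0<..}"
  shows "integrable (gev_measure (g0,m0,s0)) F"
proof -
  define p where "p = gev_density (g0,m0,s0)"
  define f where "f = (\<lambda>x. p x * F x)"
  define h where "h = (\<lambda>y. m0 + s0 * gev_z_of_u g0 y)"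
  have mp: "p \<in> borel_measurable borel" using borel_measurable_gev_density by (simp add: p_def)
  have mf: "f \<in> borel_measurable borel" unfolding f_def using mp F by measurable
  have eq: "\<bar>- s0 * y powr (- g0 - 1)\<bar> * f (h y) = exp (- y) * F (h y)" if y: "0 < y" for y
  proof -
    note hy = gev_w_gev_z_of_u[OF y s0, of g0 m0, folded h_def]
    have "p (h y) = (1/s0) * exp (- y) * y powr (g0 + 1)"
      using gev_density_eq[OF s0 hy(1)] hy(2) y by (simp add: p_def powr_def h_def algebra_simps)
    moreover have "y powr (- g0 - 1) * y powr (g0 + 1) = 1" using y by (simp flip: powr_add)
    ultimately show ?thesis using s0 y by (simp add: f_def abs_mult)
  qed
  have "(\<lambda>y. \<bar>- s0 * y powr (- g0 - 1)\<bar> * f (h y)) absolutely_integrable_on {0<..}"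
    by (rule set_integrable_cong[THEN iffD1, OF refl refl _ int]) (use eq in \<open>auto simp: h_def\<close>)
  hence "f absolutely_integrable_on h ` {0<..}"
  proof (subst absolutely_integrable_change_of_variables_1')
    show "(h has_field_derivative - s0 * y powr (- g0 - 1)) (at y within {0<..})" if "y \<in> {0<..}" for y
      using has_real_derivative_gev_z_of_u[of y m0 s0 g0] that unfolding h_def
      by (auto intro: has_field_derivative_at_within)
    show "inj_on h {0<..}" unfolding h_def by (rule inj_on_gev_z_of_u[OF s0])
  qed auto
  moreover have "f x = 0" if "x \<notin> h ` {0<..}" for x
  proof -
    have "\<not> 0 < 1 + g0*((x - m0)/s0)"
    proof
      assume "0 < 1 + g0*((x - m0)/s0)"
      hence "x = h (exp (- gev_w g0 ((x - m0)/s0)))" using gev_z_of_u_gev_w[OF s0] by (simp add: h_def)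
      thus False using that by auto
    qed
    thus ?thesis by (simp add: f_def p_def gev_density_def)
  qed
  ultimately have "(\<lambda>x. if x \<in> h ` {0<..} then f x else 0) absolutely_integrable_on UNIV"
    and "(\<lambda>x. if x \<in> h ` {0<..} then f x else 0) = f"
    by (auto simp: absolutely_integrable_restrict_UNIV)
  hence "f absolutely_integrable_on UNIV" by simp
  hence "integrable lborel f"
    using integrable_completion[of f lborel] mf by (simp add: set_integrable_def)
  hence "integrable (density lborel p) F"
    using mp F gev_density_nonneg[OF s0] by (subst integrable_density) (auto simp: p_def f_def)
  thus ?thesis by (simp add: gev_measure_def p_def)
qed

lemma integrable_gev_u_powr_sq:
  fixes g0 m0 s0 K a b :: real
  assumes s0: "0 < s0" and a: "0 < a" "a < 1/2" and b: "0 < b"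
  shows "integrable (gev_measure (g0,m0,s0))
           (\<lambda>x. (K * (gev_u (g0,m0,s0) x powr (- a) + gev_u (g0,m0,s0) x powr b))\<^sup>2)"
proof (rule integrable_gev_measure_by_u[OF s0])
  show "(\<lambda>x. (K * (gev_u (g0,m0,s0) x powr (- a) + gev_u (g0,m0,s0) x powr b))\<^sup>2) \<in> borel_measurable borel"
    using borel_measurable_gev_u by measurable
  define G where "G y = K\<^sup>2 * (y powr ((1 - 2*a) - 1) / exp y + 2 * (y powr ((b - a + 1) - 1) / exp y)
    + y powr ((2*b + 1) - 1) / exp y)" for y :: real
  have "G absolutely_integrable_on {0<..}"
    unfolding G_def using a b
    by (intro set_integrable_mult_right set_integral_add(1) gamma_kernel_absolutely_integrable) auto
  moreover have "G y = exp (- y) * (K * (gev_u (g0,m0,s0) (m0 + s0 * gev_z_of_u g0 y) powr (- a)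
      + gev_u (g0,m0,s0) (m0 + s0 * gev_z_of_u g0 y) powr b))\<^sup>2" if y: "0 < y" for y
  proof -
    note hy = gev_w_gev_z_of_u[OF y s0, of g0 m0]
    have "gev_u (g0,m0,s0) (m0 + s0 * gev_z_of_u g0 y) = y"
      using gev_u_eq_exp_gev_w[OF s0 hy(1)] hy(2) y by simp
    thus ?thesis using y
      by (simp add: G_def powr_def power2_eq_square exp_add[symmetric] exp_minus field_simps)
  qed
  ultimately show "(\<lambda>y. exp (- y) * (K * (gev_u (g0,m0,s0) (m0 + s0 * gev_z_of_u g0 y) powr (- a)
      + gev_u (g0,m0,s0) (m0 + s0 * gev_z_of_u g0 y) powr b))\<^sup>2) absolutely_integrable_on {0<..}"
    by (rule set_integrable_cong[THEN iffD1, OF refl refl, rotated]) auto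
qed

section \<open>Estimates near \<open>\<theta>0\<close>\<close>

text \<open>All bounds are expressed through \<open>w0 x\<close>, the value of \<open>w = -ln u\<close> at
  \<open>(g0, m0, s0)\<close>.\<close>

locale gev_local =
  fixes g0 m0 s0 e0 :: real
  assumes s0: "0 < s0" and g0: "-1/2 < g0" and e0: "0 < e0" "e0 \<le> 1" "e0 \<le> s0/4"
    and e0g: "g0 \<noteq> 0 \<Longrightarrow> e0 \<le> \<bar>g0\<bar>/2"
begin

definition admissible :: "real \<Rightarrow> real \<Rightarrow> real \<Rightarrow> real \<Rightarrow> real \<Rightarrow> bool" where
  "admissible e x g m s \<longleftrightarrow> 0 < e \<and> e < e0
     \<and> (\<forall>\<theta>'. norm (\<theta>' - (g0,m0,s0)) < 2*e \<longrightarrow> x \<in> gev_support \<theta>')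
     \<and> norm ((g,m,s) - (g0,m0,s0)) < e"

definition w0 :: "real \<Rightarrow> real" where "w0 x = gev_w g0 ((x - m0)/s0)"

definition envelope :: "real \<Rightarrow> real" where "envelope x = (1 + \<bar>w0 x\<bar>)\<^sup>2 + exp (- g0 * w0 x)"

definition "margin_const = 9 + 2*\<bar>g0\<bar>"
definition "growth_const = (4/(3 * s0)) * (s0 + 2 + \<bar>g0\<bar> + s0/\<bar>g0\<bar>)"
definition "log_const = ln (2*margin_const) + \<bar>ln growth_const\<bar> + ln 2"

lemma margin_const_ge_1: "1 \<le> margin_const" by (simp add: margin_const_def)

lemma log_const_nonneg: "0 \<le> log_const"
  using margin_const_ge_1 by (simp add: log_const_def)

lemma envelope_ge_1: "1 \<le> envelope x"
  unfolding envelope_def using one_le_power[of "1 + \<bar>w0 x\<bar>" 2] exp_gt_zero[of "- g0 * w0 x"]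
  by linarith

lemma exp_g0_w0:
  assumes "0 < 1 + g0*((x - m0)/s0)"
  shows "exp (g0 * w0 x) = 1 + g0*((x - m0)/s0)"
  using assms by (cases "g0 = 0") (simp_all add: w0_def gev_w_def)

lemma admissible_param_bounds:
  assumes "admissible e x g m s"
  shows "3 * s0/4 < s" "s < 5 * s0/4" "\<bar>g - g0\<bar> < e0" "\<bar>m - m0\<bar> < e0" "\<bar>s - s0\<bar> < e0"
  using abs_le_norm_triple_diff[of g m s g0 m0 s0 e] assms e0 by (auto simp: admissible_def)

lemma admissible_support_margin:
  assumes "admissible e x g m s"
  shows "0 < s0 + g0*(x - m0)" "(s0 + g0*(x - m0)) / margin_const \<le> s + g*(x - m)"
proof -
  have e: "0 < e" "e \<le> 1" "e \<le> s0/4" using assms e0 by (auto simp: admissible_def)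
  from assms have "\<forall>\<theta>'. norm (\<theta>' - (g0,m0,s0)) < 2*e \<longrightarrow> x \<in> gev_support \<theta>'"
    and "norm ((g,m,s) - (g0,m0,s0)) < e" by (auto simp: admissible_def)
  from support_margin[OF s0 e this]
  show "0 < s0 + g0*(x - m0)" "(s0 + g0*(x - m0)) / margin_const \<le> s + g*(x - m)"
    by (simp_all add: margin_const_def)
qed

lemma admissible_q0_pos:
  assumes "admissible e x g m s"
  shows "0 < 1 + g0*((x - m0)/s0)"
  using admissible_support_margin(1)[OF assms] s0 by (simp add: field_simps)

lemma admissible_q_lower:
  assumes r: "admissible e x g m s"
  defines "q \<equiv> 1 + g*((x - m)/s)" and "q0 \<equiv> 1 + g0*((x - m0)/s0)"
  shows "q0 / (2*margin_const) \<le> q" "0 < q"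
proof -
  have s: "3 * s0/4 < s" "s < 5 * s0/4" "0 < s" using admissible_param_bounds(1,2)[OF r] s0 by auto
  have C: "0 < margin_const" using margin_const_ge_1 by simp
  have q0p: "0 < q0" using admissible_q0_pos[OF r] by (simp add: q0_def)
  have "q0 / (2*margin_const) \<le> (s0/s) * (q0 / margin_const)"
    using s s0 q0p C by (simp add: field_simps)
  also have "\<dots> = (s0 + g0*(x - m0)) / margin_const / s"
  proof -
    have q0: "s0*q0 = s0 + g0*(x - m0)" using s0 by (simp add: q0_def field_simps)
    show ?thesis by (simp flip: q0)
  qed
  also have "\<dots> \<le> (s + g*(x - m))/s"
    using admissible_support_margin(2)[OF r] s by (intro divide_right_mono) auto
  also have "\<dots> = q" using s by (simp add: q_def field_simps)
  finally show "q0 / (2*margin_const) \<le> q" .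
  moreover have "0 < q0 / (2*margin_const)" using q0p C by simp
  ultimately show "0 < q" by linarith
qed

lemma admissible_q_upper:
  assumes r: "admissible e x g m s"
  defines "q \<equiv> 1 + g*((x - m)/s)" and "q0 \<equiv> 1 + g0*((x - m0)/s0)"
  shows "q \<le> (4/(3 * s0)) * (s0*q0 + 2 + \<bar>g0\<bar> + s0*\<bar>(x - m0)/s0\<bar>)"
proof -
  note P = admissible_param_bounds[OF r]
  have s: "0 < s" using P(1) s0 by linarith
  have "\<bar>(g - g0)*(x - m0)\<bar> \<le> \<bar>x - m0\<bar>"
    using P(3) e0 mult_right_mono[of "\<bar>g - g0\<bar>" 1 "\<bar>x - m0\<bar>"] by (simp add: abs_mult)
  moreover have "\<bar>g*(m - m0)\<bar> \<le> \<bar>g0\<bar> + 1"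
    using P(3,4) e0 mult_mono[of "\<bar>g\<bar>" "\<bar>g0\<bar> + 1" "\<bar>m - m0\<bar>" 1] by (simp add: abs_mult)
  moreover have "s + g*(x - m) = s0*q0 + (s - s0) + (g - g0)*(x - m0) - g*(m - m0)"
    using s0 by (simp add: q0_def field_simps)
  moreover have "\<bar>x - m0\<bar> = s0*\<bar>(x - m0)/s0\<bar>" using s0 by (simp add: abs_divide)
  moreover have "s - s0 \<le> 1" using P(5) e0 by linarith
  ultimately have Su: "s + g*(x - m) \<le> s0*q0 + 2 + \<bar>g0\<bar> + s0*\<bar>(x - m0)/s0\<bar>"
    by (simp only: abs_le_iff) linarith
  have "q = (s + g*(x - m))/s" using s by (simp add: q_def field_simps)
  also have "\<dots> \<le> (s0*q0 + 2 + \<bar>g0\<bar> + s0*\<bar>(x - m0)/s0\<bar>) / s"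
    using Su s by (intro divide_right_mono) auto
  also have "\<dots> \<le> (s0*q0 + 2 + \<bar>g0\<bar> + s0*\<bar>(x - m0)/s0\<bar>) / (3 * s0/4)"
    using P(1) s0 admissible_q0_pos[OF r] by (intro divide_left_mono) (auto simp: q0_def)
  finally show ?thesis by (simp add: field_simps)
qed

lemma admissible_segment:
  assumes r1: "admissible e x g1 m1 s1" and r2: "admissible e x g2 m2 s2" and t: "0 \<le> t" "t \<le> 1"
  shows "admissible e x (g2 + t*(g1 - g2)) (m2 + t*(m1 - m2)) (s2 + t*(s1 - s2))"
proof -
  have "(g1,m1,s1) \<in> ball (g0,m0,s0) e" "(g2,m2,s2) \<in> ball (g0,m0,s0) e"
    using r1 r2 unfolding mem_ball dist_norm norm_minus_commute[of "(g0,m0,s0)"] admissible_def by blast+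
  hence "t *\<^sub>R (g1,m1,s1) + (1 - t) *\<^sub>R (g2,m2,s2) \<in> ball (g0,m0,s0) e"
    using t by (intro convexD[OF convex_ball]) auto
  moreover have "t *\<^sub>R (g1,m1,s1) + (1 - t) *\<^sub>R (g2,m2,s2)
      = (g2 + t*(g1 - g2), m2 + t*(m1 - m2), s2 + t*(s1 - s2))" by (simp add: algebra_simps)
  ultimately show ?thesis
    using r1 unfolding mem_ball dist_norm norm_minus_commute[of "(g0,m0,s0)"] admissible_def by simp
qed

lemma admissible_q_le_growth:
  assumes g0nz: "g0 \<noteq> 0" and r: "admissible e x g m s"
  defines "q \<equiv> 1 + g*((x - m)/s)" and "q0 \<equiv> 1 + g0*((x - m0)/s0)"
  shows "q \<le> growth_const * (1 + q0)"
proof -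
  define z0 where "z0 = (x - m0)/s0"
  have q0p: "0 < q0" using admissible_q0_pos[OF r] by (simp add: q0_def)
  have "z0 = (q0 - 1)/g0" using g0nz by (simp add: q0_def z0_def)
  hence "\<bar>z0\<bar> \<le> (q0 + 1)/\<bar>g0\<bar>" using q0p by (simp add: abs_divide divide_right_mono)
  hence "s0*\<bar>z0\<bar> \<le> (s0/\<bar>g0\<bar>)*(1 + q0)"
    using s0 mult_left_mono[of "\<bar>z0\<bar>" "(q0 + 1)/\<bar>g0\<bar>" s0] by (simp add: field_simps)
  moreover have "s0*q0 \<le> s0*(1 + q0)" "2 + \<bar>g0\<bar> \<le> (2 + \<bar>g0\<bar>)*(1 + q0)"
    using s0 q0p mult_left_mono[of 1 "1 + q0" "2 + \<bar>g0\<bar>"] by simp_all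
  ultimately have "s0*q0 + 2 + \<bar>g0\<bar> + s0*\<bar>z0\<bar> \<le> (s0 + 2 + \<bar>g0\<bar> + s0/\<bar>g0\<bar>) * (1 + q0)"
    by (simp add: algebra_simps)
  hence "(4/(3 * s0)) * (s0*q0 + 2 + \<bar>g0\<bar> + s0*\<bar>z0\<bar>)
      \<le> (4/(3 * s0)) * ((s0 + 2 + \<bar>g0\<bar> + s0/\<bar>g0\<bar>) * (1 + q0))"
    using s0 by (intro mult_left_mono) auto
  moreover have "q \<le> (4/(3 * s0)) * (s0*q0 + 2 + \<bar>g0\<bar> + s0*\<bar>z0\<bar>)"
    using admissible_q_upper[OF r] by (simp add: q_def q0_def z0_def)
  ultimately have "q \<le> (4/(3 * s0)) * ((s0 + 2 + \<bar>g0\<bar> + s0/\<bar>g0\<bar>) * (1 + q0))" by linarith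
  thus ?thesis by (simp only: growth_const_def mult.assoc)
qed

lemma admissible_q_bounds:
  assumes g0nz: "g0 \<noteq> 0" and r: "admissible e x g m s"
  defines "q \<equiv> 1 + g*((x - m)/s)"
  shows "0 < q" "1/q \<le> 2*margin_const*exp (- g0 * w0 x)"
    "g0 * w0 x - log_const \<le> ln q" "ln q \<le> log_const + max 0 (g0 * w0 x)"
proof -
  define q0 where "q0 = 1 + g0*((x - m0)/s0)"
  show qp: "0 < q" using admissible_q_lower(2)[OF r] by (simp add: q_def)
  have q0p: "0 < q0" using admissible_q0_pos[OF r] by (simp add: q0_def)
  have ql: "q0/(2*margin_const) \<le> q" using admissible_q_lower(1)[OF r] by (simp add: q_def q0_def)
  have eq0: "exp (g0 * w0 x) = q0" using exp_g0_w0 q0p by (simp add: q0_def)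
  have Cp: "0 < margin_const" using margin_const_ge_1 by simp
  have "1/q \<le> 1/(q0/(2*margin_const))" using ql q0p Cp qp by (intro divide_left_mono) auto
  also have "\<dots> = 2*margin_const*exp (- g0 * w0 x)" using eq0 q0p by (simp add: exp_minus field_simps)
  finally show "1/q \<le> 2*margin_const*exp (- g0 * w0 x)" .
  have "ln (q0/(2*margin_const)) \<le> ln q" using ql q0p Cp qp by (subst ln_le_cancel_iff) auto
  moreover have "ln (q0/(2*margin_const)) = g0 * w0 x - ln (2*margin_const)" using q0p Cp eq0
    by (simp add: ln_div) (metis ln_exp)
  moreover have "ln (2*margin_const) \<le> log_const" by (simp add: log_const_def)
  ultimately show "g0 * w0 x - log_const \<le> ln q" by linarith
  have "q \<le> growth_const * (1+q0)" using admissible_q_le_growth[OF g0nz r] by (simp add: q_def q0_def)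
  hence "ln q \<le> ln (growth_const * (1+q0))" using qp by simp
  also have "\<dots> = ln growth_const + ln (1+q0)"
  proof -
    have "0 < growth_const * (1+q0)" using qp \<open>q \<le> growth_const * (1+q0)\<close> by linarith
    hence "0 < growth_const" using q0p by (simp add: zero_less_mult_iff)
    thus ?thesis using q0p by (simp add: ln_mult)
  qed
  finally have lq1: "ln q \<le> ln growth_const + ln (1+q0)" .
  have lq2: "ln (1+q0) \<le> ln 2 + max 0 (g0 * w0 x)"
  proof (cases "q0 \<le> 1")
    case True
    hence "ln (1+q0) \<le> ln 2" using q0p by simp
    thus ?thesis by simp
  next
    case False
    hence "ln (1+q0) \<le> ln (2*q0)" using q0p by simp
    also have "\<dots> = ln 2 + g0 * w0 x" using q0p eq0 by (simp add: ln_mult) (metis ln_exp)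
    finally show ?thesis by simp
  qed
  have "0 \<le> ln (2*margin_const)" using margin_const_ge_1 by simp
  thus "ln q \<le> log_const + max 0 (g0 * w0 x)" unfolding log_const_def using lq1 lq2 by linarith
qed

lemma admissible_shape_bounds:
  assumes g0nz: "g0 \<noteq> 0" and r: "admissible e x g m s"
  shows "\<bar>g0\<bar>/2 \<le> \<bar>g\<bar>" "0 < g * g0" "g \<noteq> 0"
proof -
  have "\<bar>g - g0\<bar> < e0" by (rule admissible_param_bounds(3)[OF r])
  hence a: "\<bar>g - g0\<bar> < \<bar>g0\<bar>/2" using e0g[OF g0nz] by linarith
  show "\<bar>g0\<bar>/2 \<le> \<bar>g\<bar>" using a by linarith
  show "0 < g * g0" using a g0nz by (cases "g0 > 0") (auto simp: zero_less_mult_iff abs_if split: if_splits)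
  thus "g \<noteq> 0" by auto
qed

lemma admissible_abs_ln_q_le:
  assumes g0nz: "g0 \<noteq> 0" and r: "admissible e x g m s"
  shows "\<bar>ln (1 + g*((x - m)/s))\<bar> \<le> log_const + \<bar>g0\<bar>*\<bar>w0 x\<bar>"
proof -
  have "max 0 (g0 * w0 x) \<le> \<bar>g0\<bar>*\<bar>w0 x\<bar>" "- (\<bar>g0\<bar>*\<bar>w0 x\<bar>) \<le> g0 * w0 x"
    by (simp_all add: abs_mult[symmetric])
  thus ?thesis using admissible_q_bounds(3,4)[OF g0nz r] by (auto simp: abs_le_iff)
qed

lemma admissible_w_bounds:
  assumes g0nz: "g0 \<noteq> 0" and r: "admissible e x g m s"
  defines "z \<equiv> (x - m)/s" and "q \<equiv> 1 + g*((x - m)/s)"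
  shows "\<bar>gev_w g z\<bar> \<le> 2*log_const/\<bar>g0\<bar> + 2*\<bar>w0 x\<bar>"
    "- gev_w g z \<le> 2*log_const/\<bar>g0\<bar> + 2*max 0 (- w0 x)"
proof -
  note Q = admissible_q_bounds[OF g0nz r, folded q_def]
  note G = admissible_shape_bounds[OF g0nz r]
  have w: "gev_w g z = ln q / g" using G(3) by (simp add: gev_w_def q_def z_def)
  have h: "0 < \<bar>g0\<bar>/2" using g0nz by simp
  define v where "v = w0 x"
  have "\<bar>gev_w g z\<bar> = \<bar>ln q\<bar> / \<bar>g\<bar>" using w by (simp add: abs_divide)
  also have "\<dots> \<le> (log_const + \<bar>g0\<bar>*\<bar>v\<bar>) / (\<bar>g0\<bar>/2)"
    using admissible_abs_ln_q_le[OF g0nz r] log_const_nonneg G(1) h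
    by (intro frac_le) (auto simp: q_def v_def)
  also have "\<dots> = 2*log_const/\<bar>g0\<bar> + 2*\<bar>v\<bar>" using g0nz by (simp add: field_simps)
  finally show "\<bar>gev_w g z\<bar> \<le> 2*log_const/\<bar>g0\<bar> + 2*\<bar>w0 x\<bar>" by (simp add: v_def)
  define N where "N = log_const + \<bar>g0\<bar> * max 0 (- v)"
  have Nn: "0 \<le> N" using log_const_nonneg by (simp add: N_def)
  have "- gev_w g z \<le> N / (\<bar>g0\<bar>/2)"
  proof (cases "g0 > 0")
    case True
    hence gp: "0 < g" using G(2) by (simp add: zero_less_mult_iff)
    have "- ln q \<le> N"
    proof -
      have "- (g0 * v) \<le> g0 * max 0 (- v)" using mult_left_mono[of "-v" "max 0 (-v)" g0] True by simp
      thus ?thesis using Q(3) True by (simp add: N_def v_def)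
    qed
    hence "(- ln q)/\<bar>g\<bar> \<le> N / (\<bar>g0\<bar>/2)" using Nn h G(1) by (intro frac_le) auto
    thus ?thesis using w gp by simp
  next
    case False
    hence gn: "g0 < 0" using g0nz by simp
    hence gp: "g < 0" using G(2) by (simp add: zero_less_mult_iff)
    have "ln q \<le> N"
    proof -
      have "max 0 (g0 * v) = \<bar>g0\<bar> * max 0 (- v)" using gn
        by (cases "v \<le> 0") (auto simp: max_def mult_nonpos_nonpos mult_neg_neg
            zero_le_mult_iff mult_le_0_iff)
      thus ?thesis using Q(4) by (simp add: N_def v_def)
    qed
    hence "(ln q)/\<bar>g\<bar> \<le> N / (\<bar>g0\<bar>/2)" using Nn h G(1) by (intro frac_le) auto
    thus ?thesis using w gp by simp
  qed
  also have "N / (\<bar>g0\<bar>/2) = 2*log_const/\<bar>g0\<bar> + 2*max 0 (- v)" using g0nz by (simp add: N_def field_simps)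
  finally show "- gev_w g z \<le> 2*log_const/\<bar>g0\<bar> + 2*max 0 (- w0 x)" by (simp add: v_def)
qed

lemma admissible_w_dshape_bound:
  assumes g0nz: "g0 \<noteq> 0" and r: "admissible e x g m s"
  defines "z \<equiv> (x - m)/s" and "q \<equiv> 1 + g*((x - m)/s)"
  shows "\<bar>gev_w_dshape g z\<bar> + (1 + \<bar>z\<bar>)/(s*q)
    \<le> (4/g0\<^sup>2)*(log_const + \<bar>g0\<bar>*\<bar>w0 x\<bar> + 1 + 2*margin_const*exp (- g0 * w0 x))
      + (4/(3 * s0))*(2*margin_const*exp (- g0 * w0 x) + (2/\<bar>g0\<bar>)*(1 + 2*margin_const*exp (- g0 * w0 x)))"
proof -
  note Q = admissible_q_bounds[OF g0nz r, folded q_def]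
  note G = admissible_shape_bounds[OF g0nz r]
  have qz: "q = 1 + g*z" by (simp add: q_def z_def)
  have h: "0 < \<bar>g0\<bar>/2" using g0nz by simp
  define v where "v = w0 x"
  have alq: "\<bar>ln q\<bar> \<le> log_const + \<bar>g0\<bar>*\<bar>v\<bar>"
    using admissible_abs_ln_q_le[OF g0nz r] by (simp add: q_def v_def)
  define E where "E = exp (- g0 * v)"
  have iq: "1/q \<le> 2*margin_const*E" using Q(2) by (simp add: E_def v_def)
  have qp: "0 < 1 + g*z" using Q(1) qz by simp
  have "\<bar>gev_w_dshape g z\<bar> \<le> (\<bar>ln (1+g*z)\<bar> + 1 + 1/(1+g*z)) / g\<^sup>2" by (rule abs_gev_w_dshape_le_ln[OF G(3) qp])
  also have "\<dots> \<le> (log_const + \<bar>g0\<bar>*\<bar>v\<bar> + 1 + 2*margin_const*E) / (g0\<^sup>2/4)"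
  proof (rule frac_le)
    show "\<bar>ln (1+g*z)\<bar> + 1 + 1/(1+g*z) \<le> log_const + \<bar>g0\<bar>*\<bar>v\<bar> + 1 + 2*margin_const*E"
      using alq iq qz by simp
    show "0 \<le> log_const + \<bar>g0\<bar>*\<bar>v\<bar> + 1 + 2*margin_const*E" using log_const_nonneg margin_const_ge_1 by (simp add: E_def)
    show "0 < g0\<^sup>2/4" using g0nz by simp
    have "(\<bar>g0\<bar>/2)\<^sup>2 \<le> \<bar>g\<bar>\<^sup>2" using G(1) h by (intro power_mono) auto
    thus "g0\<^sup>2/4 \<le> g\<^sup>2" by (simp add: power_divide)
  qed
  also have "\<dots> = (4/g0\<^sup>2)*(log_const + \<bar>g0\<bar>*\<bar>v\<bar> + 1 + 2*margin_const*E)" by simp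
  finally have A: "\<bar>gev_w_dshape g z\<bar> \<le> (4/g0\<^sup>2)*(log_const + \<bar>g0\<bar>*\<bar>v\<bar> + 1 + 2*margin_const*E)" .
  have sp: "3 * s0/4 < s" by (rule admissible_param_bounds(1)[OF r])
  have zq: "z = (q - 1)/g" using G(3) qz by simp
  have "\<bar>z\<bar>/q \<le> (2/\<bar>g0\<bar>)*(1 + 2*margin_const*E)"
  proof -
    have "\<bar>z\<bar> \<le> (q+1)/\<bar>g\<bar>" unfolding zq using Q(1) by (simp add: abs_divide divide_right_mono)
    also have "\<dots> \<le> (q+1)/(\<bar>g0\<bar>/2)" using Q(1) G(1) h by (intro frac_le) auto
    finally have "\<bar>z\<bar>/q \<le> ((q+1)/(\<bar>g0\<bar>/2))/q" using Q(1) by (intro divide_right_mono) auto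
    also have "\<dots> = (2/\<bar>g0\<bar>)*(1 + 1/q)" using Q(1) g0nz by (simp add: field_simps)
    also have "\<dots> \<le> (2/\<bar>g0\<bar>)*(1 + 2*margin_const*E)" using iq by (intro mult_left_mono) auto
    finally show ?thesis .
  qed
  hence B0: "(1+\<bar>z\<bar>)/q \<le> 2*margin_const*E + (2/\<bar>g0\<bar>)*(1 + 2*margin_const*E)" using iq by (simp add: add_divide_distrib)
  have "(1+\<bar>z\<bar>)/(s*q) = ((1+\<bar>z\<bar>)/q) * (1/s)" by simp
  also have "\<dots> \<le> (2*margin_const*E + (2/\<bar>g0\<bar>)*(1 + 2*margin_const*E)) * (4/(3 * s0))"
  proof (rule mult_mono)
    show "1/s \<le> 4/(3 * s0)" using sp s0 by (simp add: field_simps)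
    show "0 \<le> 2*margin_const*E + (2/\<bar>g0\<bar>)*(1 + 2*margin_const*E)" using margin_const_ge_1 by (simp add: E_def)
    show "0 \<le> 1/s" using sp s0 by simp
  qed (use B0 in auto)
  finally have B: "(1+\<bar>z\<bar>)/(s*q) \<le> (4/(3 * s0))*(2*margin_const*E + (2/\<bar>g0\<bar>)*(1 + 2*margin_const*E))" by (simp add: mult.commute)
  show "\<bar>gev_w_dshape g z\<bar> + (1+\<bar>z\<bar>)/(s*q) \<le> (4/g0\<^sup>2)*(log_const + \<bar>g0\<bar>*\<bar>w0 x\<bar> + 1 + 2*margin_const*exp(-g0* w0 x))
        + (4/(3 * s0))*(2*margin_const*exp(-g0* w0 x) + (2/\<bar>g0\<bar>)*(1 + 2*margin_const*exp(-g0* w0 x)))"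
    using A B by (simp add: E_def v_def)
qed

lemma admissible_z_bounds_zero_shape:
  assumes g00: "g0 = 0" and r: "admissible e x g m s"
  defines "z \<equiv> (x - m)/s" and "q \<equiv> 1 + g*((x - m)/s)"
  shows "0 < q" "1/q \<le> 18" "\<bar>z\<bar> \<le> (4/(3 * s0))*(s0*\<bar>w0 x\<bar> + 1)"
    "max 0 (- z) \<le> (4/(3 * s0))*(1 + s0*max 0 (- w0 x))"
    "\<bar>z\<bar> \<le> (4/3 + 4/(3 * s0)) * (1 + \<bar>w0 x\<bar>)"
proof -
  have v: "w0 x = (x - m0)/s0" unfolding w0_def gev_w_def using g00 by simp
  show qp: "0 < q" using admissible_q_lower(2)[OF r] by (simp add: q_def)
  have "1/18 \<le> q" using admissible_q_lower(1)[OF r] g00 unfolding margin_const_def by (simp add: q_def)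
  thus iq: "1/q \<le> 18" using qp by (simp add: field_simps)
  have sp: "3 * s0/4 < s" by (rule admissible_param_bounds(1)[OF r])
  have s0p: "0 < s" using sp s0 by linarith
  have iss: "1/s \<le> 4/(3 * s0)" using sp s0 by (simp add: field_simps)
  have mm: "\<bar>m - m0\<bar> \<le> 1" using admissible_param_bounds(4)[OF r] e0 by linarith
  have xm: "\<bar>x - m\<bar> \<le> s0*\<bar>w0 x\<bar> + 1"
  proof -
    have "\<bar>x - m0\<bar> = s0*\<bar>w0 x\<bar>" using s0 v by (simp add: abs_divide)
    thus ?thesis using mm by linarith
  qed
  have "\<bar>z\<bar> = \<bar>x - m\<bar> * (1/s)" using s0p by (simp add: z_def abs_divide)
  also have "\<dots> \<le> (s0*\<bar>w0 x\<bar> + 1) * (4/(3 * s0))" using xm iss s0p s0 by (intro mult_mono) auto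
  finally show az: "\<bar>z\<bar> \<le> (4/(3 * s0))*(s0*\<bar>w0 x\<bar> + 1)" by (simp add: mult.commute)
  also have "\<dots> \<le> (4/3 + 4/(3 * s0)) * (1 + \<bar>w0 x\<bar>)"
    using s0 by (simp add: field_simps)
  finally show "\<bar>z\<bar> \<le> (4/3 + 4/(3 * s0)) * (1 + \<bar>w0 x\<bar>)" .
  have mz: "max 0 (m - x) \<le> 1 + s0*max 0 (- w0 x)"
  proof -
    have "m0 - x = s0 * (- w0 x)" using s0 v by (simp add: field_simps)
    moreover have "s0 * (- w0 x) \<le> s0*max 0 (- w0 x)" using s0 by (intro mult_left_mono) auto
    moreover have "0 \<le> s0*max 0 (- w0 x)" using s0 by simp
    ultimately show ?thesis using mm by (auto simp: abs_le_iff)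
  qed
  have "max 0 (- z) = max 0 (m - x) * (1/s)" using s0p by (auto simp: z_def max_def field_simps)
  also have "\<dots> \<le> (1 + s0*max 0 (- w0 x)) * (4/(3 * s0))" using mz iss s0p s0 by (intro mult_mono) auto
  finally show "max 0 (- z) \<le> (4/(3 * s0))*(1 + s0*max 0 (- w0 x))" by (simp add: mult.commute)
qed

lemma admissible_w_bounds_zero_shape:
  assumes g00: "g0 = 0" and r: "admissible e x g m s"
  defines "z \<equiv> (x - m)/s" and "q \<equiv> 1 + g*((x - m)/s)"
  shows "\<bar>gev_w g z\<bar> \<le> 18*\<bar>z\<bar>" "- gev_w g z \<le> 18 * max 0 (- z)"
    "g \<noteq> 0 \<Longrightarrow> \<bar>gev_w_dshape g z\<bar> + (1 + \<bar>z\<bar>)/(s*q) \<le> 18*z\<^sup>2 + (4/(3 * s0))*(18*(1 + \<bar>z\<bar>))"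
    "z\<^sup>2/q + (1 + \<bar>z\<bar>)*(4/(3 * s0)) \<le> 18*z\<^sup>2 + (4/(3 * s0))*(18*(1 + \<bar>z\<bar>))"
proof -
  note ZB = admissible_z_bounds_zero_shape[OF g00 r, folded z_def q_def]
  have qp: "0 < q" and iq: "1/q \<le> 18" using ZB(1,2) .
  have s0p: "0 < s" and iss: "1/s \<le> 4/(3 * s0)"
    using admissible_param_bounds(1)[OF r] s0 by (simp_all add: field_simps)
  have qz: "q = 1 + g*z" by (simp add: q_def z_def)
  have qp': "0 < 1 + g*z" using qp qz by simp
  note LB = gev_w_between[OF qp', folded qz]
  have zq: "\<bar>z/q\<bar> \<le> 18*\<bar>z\<bar>"
  proof -
    have "\<bar>z/q\<bar> = \<bar>z\<bar>*(1/q)" using qp by (simp add: abs_divide)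
    also have "\<dots> \<le> \<bar>z\<bar>*18" using iq by (intro mult_left_mono) auto
    finally show ?thesis by simp
  qed
  have l1: "-(18*\<bar>z\<bar>) \<le> z" "z \<le> 18*\<bar>z\<bar>" by (simp_all add: abs_if)
  have l2: "-(18*\<bar>z\<bar>) \<le> z/q" "z/q \<le> 18*\<bar>z\<bar>" using zq abs_ge_minus_self[of "z/q"] abs_ge_self[of "z/q"] by linarith+
  have A: "-(18*\<bar>z\<bar>) \<le> min z (z/q)" "max z (z/q) \<le> 18*\<bar>z\<bar>" using l1 l2 by simp_all
  show "\<bar>gev_w g z\<bar> \<le> 18*\<bar>z\<bar>" unfolding abs_le_iff using LB A by linarith
  have zq2: "- (z/q) \<le> 18 * max 0 (- z)"
  proof -
    have "- (z/q) = (- z)*(1/q)" by simp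
    also have "\<dots> \<le> max 0 (- z) * (1/q)" using qp by (intro mult_right_mono) auto
    also have "\<dots> \<le> max 0 (- z) * 18" using iq by (intro mult_left_mono) auto
    finally show ?thesis by simp
  qed
  have "- z \<le> 18 * max 0 (- z)" by simp
  hence "- min z (z/q) \<le> 18 * max 0 (- z)" using zq2 by (simp add: min_def)
  thus "- gev_w g z \<le> 18 * max 0 (- z)" using LB(1) by linarith
  have z2q: "z\<^sup>2/q \<le> 18*z\<^sup>2"
  proof -
    have "z\<^sup>2/q = z\<^sup>2*(1/q)" by simp
    also have "\<dots> \<le> z\<^sup>2*18" using iq by (intro mult_left_mono) auto
    finally show ?thesis by simp
  qed
  have t2: "(1+\<bar>z\<bar>)/(s*q) \<le> (4/(3 * s0))*(18*(1+\<bar>z\<bar>))"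
  proof -
    have "(1+\<bar>z\<bar>)/(s*q) = (1/s)*((1+\<bar>z\<bar>)*(1/q))" by simp
    also have "\<dots> \<le> (4/(3 * s0))*((1+\<bar>z\<bar>)*18)"
      using iss iq s0p qp s0 by (intro mult_mono) auto
    finally show ?thesis by simp
  qed
  show "g \<noteq> 0 \<Longrightarrow> \<bar>gev_w_dshape g z\<bar> + (1+\<bar>z\<bar>)/(s*q) \<le> 18*z\<^sup>2 + (4/(3 * s0))*(18*(1+\<bar>z\<bar>))"
    using abs_gev_w_dshape_le_sq[OF _ qp', folded qz] z2q t2 by fastforce
  have "(1+\<bar>z\<bar>)*(4/(3 * s0)) \<le> (18*(1+\<bar>z\<bar>))*(4/(3 * s0))" using s0 by (intro mult_right_mono) auto
  hence "(1+\<bar>z\<bar>)*(4/(3 * s0)) \<le> (4/(3 * s0))*(18*(1+\<bar>z\<bar>))" by (simp only: mult.commute)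
  thus "z\<^sup>2/q + (1+\<bar>z\<bar>)*(4/(3 * s0)) \<le> 18*z\<^sup>2 + (4/(3 * s0))*(18*(1+\<bar>z\<bar>))" using z2q by simp
qed

text \<open>The last clause serves segments through \<open>\<gamma> = 0\<close>.\<close>

definition w_bounds :: "real \<Rightarrow> real \<Rightarrow> bool" where
  "w_bounds c \<beta> \<longleftrightarrow> 0 < c \<and> 0 \<le> \<beta> \<and> (\<forall>e x g m s. admissible e x g m s \<longrightarrow>
     \<bar>gev_w g ((x - m)/s)\<bar> \<le> c * envelope x \<and>
     exp (- gev_w g ((x - m)/s)) \<le> c * exp (\<beta> * max 0 (- w0 x)) \<and>
     (g \<noteq> 0 \<longrightarrow> \<bar>gev_w_dshape g ((x - m)/s)\<bar> + (1+\<bar>(x - m)/s\<bar>)/(s*(1+g*((x - m)/s))) \<le> c * envelope x) \<and>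
     (g0 = 0 \<longrightarrow> ((x - m)/s)\<^sup>2/(1+g*((x - m)/s)) + (1+\<bar>(x - m)/s\<bar>)*(4/(3 * s0)) \<le> c * envelope x))"

lemma w_boundsD:
  assumes "w_bounds c \<beta>" "admissible e x g m s"
  shows "0 < c" "0 \<le> \<beta>" "\<bar>gev_w g ((x - m)/s)\<bar> \<le> c * envelope x"
    "exp (- gev_w g ((x - m)/s)) \<le> c * exp (\<beta> * max 0 (- w0 x))"
    "g \<noteq> 0 \<Longrightarrow> \<bar>gev_w_dshape g ((x - m)/s)\<bar> + (1+\<bar>(x - m)/s\<bar>)/(s*(1+g*((x - m)/s))) \<le> c * envelope x"
    "g0 = 0 \<Longrightarrow> ((x - m)/s)\<^sup>2/(1+g*((x - m)/s)) + (1+\<bar>(x - m)/s\<bar>)*(4/(3 * s0)) \<le> c * envelope x"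
  using assms unfolding w_bounds_def by blast+

lemma le_envelope_multiple:
  assumes "0 \<le> a" "0 \<le> b" "0 \<le> d" "0 \<le> f"
    and "X \<le> a + b*\<bar>w0 x\<bar> + d*(1 + \<bar>w0 x\<bar>)\<^sup>2 + f*exp (- g0 * w0 x)"
  shows "X \<le> (a + b + d + f) * envelope x"
  unfolding envelope_def using assms by (intro le_coeff_sum_times_envelope) auto

lemma w_bounds_exist_nonzero_shape:
  assumes g0nz: "g0 \<noteq> 0"
  shows "\<exists>c \<beta>. w_bounds c \<beta>"
proof -
  define cw where "cw = 2*log_const/\<bar>g0\<bar> + 2"
  define ce where "ce = exp (2*log_const/\<bar>g0\<bar>)"
  define aA where "aA = (4/g0\<^sup>2)*(log_const+1) + (4/(3 * s0))*(2/\<bar>g0\<bar>)"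
  define bA where "bA = (4/g0\<^sup>2)*\<bar>g0\<bar>"
  define fA where "fA = (4/g0\<^sup>2)*(2*margin_const) + (4/(3 * s0))*(2*margin_const + (2/\<bar>g0\<bar>)*(2*margin_const))"
  have pos: "0 \<le> cw" "0 < ce" "0 \<le> aA" "0 \<le> bA" "0 \<le> fA"
    using log_const_nonneg s0 margin_const_ge_1 g0nz by (auto simp: cw_def ce_def aA_def bA_def fA_def)
  define c where "c = cw + ce + (aA + bA + 0 + fA)"
  have cpos: "0 < c" using pos by (simp add: c_def)
  show ?thesis unfolding w_bounds_def
  proof (intro exI conjI allI impI)
    show "0 < c" by (rule cpos)
    show "0 \<le> (2::real)" by simp
    fix e x g m s assume r: "admissible e x g m s"
    note W = admissible_w_bounds[OF g0nz r]
    have env1: "1 \<le> envelope x" by (rule envelope_ge_1)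
    have "\<bar>gev_w g ((x - m)/s)\<bar> \<le> (2*log_const/\<bar>g0\<bar> + 2 + 0 + 0) * envelope x"
      by (rule le_envelope_multiple) (use W(1) log_const_nonneg in auto)
    also have "\<dots> \<le> c * envelope x" using pos env1 by (intro mult_right_mono) (auto simp: c_def cw_def)
    finally show "\<bar>gev_w g ((x - m)/s)\<bar> \<le> c * envelope x" .
    have "exp (- gev_w g ((x - m)/s)) \<le> exp (2*log_const/\<bar>g0\<bar> + 2*max 0 (- w0 x))" using W(2) by simp
    also have "\<dots> = ce * exp (2 * max 0 (- w0 x))" by (simp add: ce_def exp_add)
    also have "\<dots> \<le> c * exp (2 * max 0 (- w0 x))" using pos by (intro mult_right_mono) (auto simp: c_def)
    finally show "exp (- gev_w g ((x - m)/s)) \<le> c * exp (2 * max 0 (- w0 x))" .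
    show "\<bar>gev_w_dshape g ((x - m)/s)\<bar> + (1+\<bar>(x - m)/s\<bar>)/(s*(1+g*((x - m)/s))) \<le> c * envelope x" if "g \<noteq> 0"
    proof -
      have "\<bar>gev_w_dshape g ((x - m)/s)\<bar> + (1+\<bar>(x - m)/s\<bar>)/(s*(1+g*((x - m)/s))) \<le> (aA + bA + 0 + fA) * envelope x"
      proof (rule le_envelope_multiple)
        show "\<bar>gev_w_dshape g ((x - m)/s)\<bar> + (1+\<bar>(x - m)/s\<bar>)/(s*(1+g*((x - m)/s))) \<le> aA + bA*\<bar>w0 x\<bar> + 0*(1+\<bar>w0 x\<bar>)\<^sup>2 + fA*exp (- g0 * w0 x)"
        proof -
          have eqR: "(4/g0\<^sup>2)*(log_const + \<bar>g0\<bar>*\<bar>w0 x\<bar> + 1 + 2*margin_const*exp(-g0* w0 x))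
            + (4/(3 * s0))*(2*margin_const*exp(-g0* w0 x) + (2/\<bar>g0\<bar>)*(1 + 2*margin_const*exp(-g0* w0 x)))
            = aA + bA*\<bar>w0 x\<bar> + 0*(1+\<bar>w0 x\<bar>)\<^sup>2 + fA*exp (- g0 * w0 x)"
            using g0nz s0 by (simp add: aA_def bA_def fA_def field_simps)
          show ?thesis using admissible_w_dshape_bound[OF g0nz r] eqR by linarith
        qed
      qed (use pos in auto)
      also have "\<dots> \<le> c * envelope x" using pos env1 by (intro mult_right_mono) (auto simp: c_def)
      finally show "\<bar>gev_w_dshape g ((x - m)/s)\<bar> + (1+\<bar>(x - m)/s\<bar>)/(s*(1+g*((x - m)/s))) \<le> c * envelope x" .
    qed
    show "((x - m)/s)\<^sup>2/(1+g*((x - m)/s)) + (1+\<bar>(x - m)/s\<bar>)*(4/(3 * s0)) \<le> c * envelope x" if "g0 = 0"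
      using g0nz that by simp
  qed
qed

lemma w_bounds_exist_zero_shape:
  assumes g00: "g0 = 0"
  shows "\<exists>c \<beta>. w_bounds c \<beta>"
proof -
  define K where "K = 4/3 + 4/(3 * s0)"
  have Kp: "0 < K" using s0 by (simp add: K_def add_pos_pos)
  define cw where "cw = 24/s0 + 24"
  define ce where "ce = exp (24/s0)"
  define aA where "aA = 24/s0 + 24*K/s0"
  define bA where "bA = 24*K/s0"
  define dA where "dA = 18*K\<^sup>2"
  have pos: "0 \<le> cw" "0 < ce" "0 \<le> aA" "0 \<le> bA" "0 \<le> dA"
    using s0 Kp by (auto simp: cw_def ce_def aA_def bA_def dA_def)
  define c where "c = cw + ce + (aA + bA + dA + 0)"
  have cpos: "0 < c" using pos by (simp add: c_def)
  show ?thesis unfolding w_bounds_def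
  proof (intro exI conjI allI impI)
    show "0 < c" by (rule cpos)
    show "0 \<le> (24::real)" by simp
    fix e x g m s assume r: "admissible e x g m s"
    define z where "z = (x - m)/s"
    note ZB = admissible_z_bounds_zero_shape[OF g00 r, folded z_def]
    note ZW = admissible_w_bounds_zero_shape[OF g00 r, folded z_def]
    have env1: "1 \<le> envelope x" by (rule envelope_ge_1)
    have azl: "\<bar>z\<bar> \<le> (4/3)*\<bar>w0 x\<bar> + 4/(3 * s0)"
      using ZB(3) s0 by (simp add: field_simps)
    have azK: "\<bar>z\<bar> \<le> K*(1+\<bar>w0 x\<bar>)" using ZB(5) by (simp add: K_def)
    have z2: "z\<^sup>2 \<le> K\<^sup>2*(1+\<bar>w0 x\<bar>)\<^sup>2"
    proof -
      have "\<bar>z\<bar>\<^sup>2 \<le> (K*(1+\<bar>w0 x\<bar>))\<^sup>2" using azK by (intro power_mono) auto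
      thus ?thesis by (simp add: power_mult_distrib)
    qed
    have "\<bar>gev_w g z\<bar> \<le> 24/s0 + 24*\<bar>w0 x\<bar> + 0*(1+\<bar>w0 x\<bar>)\<^sup>2 + 0*exp (- g0 * w0 x)"
    proof -
      have "18*((4/3)*\<bar>w0 x\<bar> + 4/(3 * s0)) = 24*\<bar>w0 x\<bar> + 24/s0" by simp
      thus ?thesis using ZW(1) azl by simp
    qed
    hence "\<bar>gev_w g z\<bar> \<le> (24/s0 + 24 + 0 + 0) * envelope x"
      using s0 by (intro le_envelope_multiple) auto
    also have "\<dots> \<le> c * envelope x" using pos env1 by (intro mult_right_mono) (auto simp: c_def cw_def)
    finally show "\<bar>gev_w g ((x - m)/s)\<bar> \<le> c * envelope x" by (simp add: z_def)
    have "- gev_w g z \<le> 18 * ((4/(3 * s0))*(1 + s0*max 0 (- w0 x)))"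
      using ZW(2) ZB(4) by linarith
    also have "\<dots> = 24/s0 + 24 * max 0 (- w0 x)" using s0 by (simp add: field_simps)
    finally have "exp (- gev_w g z) \<le> exp (24/s0 + 24 * max 0 (- w0 x))" by simp
    also have "\<dots> = ce * exp (24 * max 0 (- w0 x))" by (simp add: ce_def exp_add)
    also have "\<dots> \<le> c * exp (24 * max 0 (- w0 x))" using pos by (intro mult_right_mono) (auto simp: c_def)
    finally show "exp (- gev_w g ((x - m)/s)) \<le> c * exp (24 * max 0 (- w0 x))" by (simp add: z_def)
    have main: "18*z\<^sup>2 + (4/(3 * s0))*(18*(1+\<bar>z\<bar>)) \<le> c * envelope x"
    proof -
      have "18*z\<^sup>2 + (4/(3 * s0))*(18*(1+\<bar>z\<bar>)) = 18*z\<^sup>2 + 24/s0 + (24/s0)*\<bar>z\<bar>" using s0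
        by (simp add: field_simps)
      also have "\<dots> \<le> 18*(K\<^sup>2*(1+\<bar>w0 x\<bar>)\<^sup>2) + 24/s0 + (24/s0)*(K*(1+\<bar>w0 x\<bar>))"
        using z2 azK s0 by (intro add_mono mult_left_mono) auto
      also have "\<dots> = aA + bA*\<bar>w0 x\<bar> + dA*(1+\<bar>w0 x\<bar>)\<^sup>2 + 0*exp (- g0 * w0 x)"
        by (simp add: aA_def bA_def dA_def algebra_simps)
      finally have hM: "18*z\<^sup>2 + (4/(3 * s0))*(18*(1+\<bar>z\<bar>)) \<le> aA + bA*\<bar>w0 x\<bar> + dA*(1+\<bar>w0 x\<bar>)\<^sup>2 + 0*exp (- g0 * w0 x)" .
      have "18*z\<^sup>2 + (4/(3 * s0))*(18*(1+\<bar>z\<bar>)) \<le> (aA+bA+dA+0) * envelope x"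
        by (rule le_envelope_multiple[OF _ _ _ _ hM]) (use pos in auto)
      also have "\<dots> \<le> c * envelope x" using pos env1 by (intro mult_right_mono) (auto simp: c_def)
      finally show ?thesis .
    qed
    show "\<bar>gev_w_dshape g ((x - m)/s)\<bar> + (1+\<bar>(x - m)/s\<bar>)/(s*(1+g*((x - m)/s))) \<le> c * envelope x" if "g \<noteq> 0"
      using ZW(3)[OF that] main unfolding z_def by linarith
    show "((x - m)/s)\<^sup>2/(1+g*((x - m)/s)) + (1+\<bar>(x - m)/s\<bar>)*(4/(3 * s0)) \<le> c * envelope x" if "g0 = 0"
      using ZW(4) main unfolding z_def by linarith
  qed
qed

lemma w_bounds_exist: "\<exists>c \<beta>. w_bounds c \<beta>"
  using w_bounds_exist_nonzero_shape w_bounds_exist_zero_shape by blast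

lemma gev_w_lipschitz_zero_shape:
  assumes c: "w_bounds c \<beta>" and g00: "g0 = 0" and r: "admissible e x g m s" and r': "admissible e x 0 m' s'"
  shows "\<bar>gev_w g ((x - m)/s) - gev_w 0 ((x - m')/s')\<bar> \<le> 2*c*envelope x * norm ((g,m,s) - (0,m',s'))"
proof -
  define z where "z = (x - m)/s"
  define z' where "z' = (x - m')/s'"
  define q where "q = 1 + g*z"
  define N where "N = norm ((g,m,s) - (0,m',s'))"
  have Nb: "\<bar>g\<bar> \<le> N" "\<bar>m' - m\<bar> \<le> N" "\<bar>s' - s\<bar> \<le> N"
    using abs_le_norm_triple[where a="g" and b="m - m'" and c="s - s'"] by (auto simp: N_def abs_minus_commute)
  have B: "3 * s0/4 < s" "3 * s0/4 < s'" using admissible_param_bounds(1)[OF r] admissible_param_bounds(1)[OF r'] by auto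
  have sp: "0 < s" using B s0 by linarith
  have qp: "0 < q" using admissible_q_lower(2)[OF r] by (simp add: q_def z_def)
  have I1: "z\<^sup>2/q + (1+\<bar>z\<bar>)*(4/(3 * s0)) \<le> c * envelope x" using w_boundsD(6)[OF c r g00]
    by (simp add: q_def z_def)
  have I2: "z'\<^sup>2/(1+0*z') + (1+\<bar>z'\<bar>)*(4/(3 * s0)) \<le> c * envelope x" using w_boundsD(6)[OF c r' g00]
    by (simp add: z'_def)
  have nn1: "0 \<le> (1+\<bar>z\<bar>)*(4/(3 * s0))" using s0 by simp
  have nn2: "0 \<le> z'\<^sup>2/(1+0*z')" by simp
  have lz: "gev_w 0 z' = z'" by (simp add: gev_w_def)
  have t1: "\<bar>gev_w g z - z\<bar> \<le> N * (z\<^sup>2/q)"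
  proof -
    have "\<bar>gev_w g z - z\<bar> \<le> \<bar>g\<bar> * z\<^sup>2 / q" using abs_gev_w_minus_le[of g z] qp by (simp add: q_def)
    also have "\<dots> = \<bar>g\<bar> * (z\<^sup>2/q)" by simp
    also have "\<dots> \<le> N * (z\<^sup>2/q)" using Nb qp by (intro mult_right_mono) auto
    finally show ?thesis .
  qed
  have t2: "\<bar>z - z'\<bar> \<le> N * ((1+\<bar>z'\<bar>)*(4/(3 * s0)))"
  proof -
    have "\<bar>z - z'\<bar> \<le> N * (1 + \<bar>z'\<bar>) * (1/s)"
      using abs_standardised_diff_le[where g=g and g'=0 and x=x, OF sp] B s0
      by (simp add: z_def z'_def N_def)
    also have "\<dots> \<le> N * (1 + \<bar>z'\<bar>) * (4/(3 * s0))"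
      using B s0 sp Nb by (intro mult_left_mono) (auto simp: field_simps)
    finally show ?thesis by (simp add: algebra_simps)
  qed
  have "\<bar>gev_w g z - gev_w 0 z'\<bar> \<le> \<bar>gev_w g z - z\<bar> + \<bar>z - z'\<bar>" using lz by simp
  also have "\<dots> \<le> N * (z\<^sup>2/q) + N * ((1+\<bar>z'\<bar>)*(4/(3 * s0)))" using t1 t2 by simp
  also have "\<dots> \<le> N * (c * envelope x) + N * (c * envelope x)"
  proof -
    have A1: "z\<^sup>2/q \<le> c * envelope x" using I1 nn1 by linarith
    have A2: "(1+\<bar>z'\<bar>)*(4/(3 * s0)) \<le> c * envelope x" using I2 nn2 by linarith
    show ?thesis using A1 A2 Nb by (intro add_mono mult_left_mono) auto
  qed
  finally show ?thesis by (simp add: z_def z'_def N_def algebra_simps)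
qed

lemma gev_w_lipschitz_same_sign:
  assumes c: "w_bounds c \<beta>" and r1: "admissible e x g1 m1 s1" and r2: "admissible e x g2 m2 s2" and gg: "0 < g1*g2"
  shows "\<bar>gev_w g1 ((x - m1)/s1) - gev_w g2 ((x - m2)/s2)\<bar> \<le> c*envelope x * norm ((g1,m1,s1) - (g2,m2,s2))"
proof -
  show ?thesis
  proof (rule gev_w_segment_lipschitz)
    fix t :: real assume t: "0 \<le> t" "t \<le> 1"
    note rt = admissible_segment[OF r1 r2 t]
    show "0 < s2 + t*(s1 - s2) \<and> 0 < 1 + (g2 + t*(g1 - g2)) * ((x - (m2 + t*(m1 - m2)))/(s2 + t*(s1 - s2))) \<and> g2 + t*(g1 - g2) \<noteq> 0"
      using admissible_param_bounds(1)[OF rt] admissible_q_lower(2)[OF rt] s0 segment_ne_zero_of_same_sign[OF gg t] by auto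
    show "\<bar>gev_w_dshape (g2 + t*(g1 - g2)) ((x - (m2 + t*(m1 - m2)))/(s2 + t*(s1 - s2)))\<bar> + (1 + \<bar>(x - (m2 + t*(m1 - m2)))/(s2 + t*(s1 - s2))\<bar>) / ((s2 + t*(s1 - s2)) * (1 + (g2 + t*(g1 - g2)) * ((x - (m2 + t*(m1 - m2)))/(s2 + t*(s1 - s2))))) \<le> c*envelope x"
      using w_boundsD(5)[OF c rt segment_ne_zero_of_same_sign[OF gg t]] by simp
  qed
qed

lemma admissible_same_sign:
  assumes "g0 \<noteq> 0" and r1: "admissible e x g1 m1 s1" and r2: "admissible e x g2 m2 s2"
  shows "0 < g1*g2"
proof -
  have "0 < (g1*g0)*(g2*g0)" using admissible_shape_bounds(2)[OF assms(1) r1] admissible_shape_bounds(2)[OF assms(1) r2] by simp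
  hence "0 < (g1*g2)*(g0*g0)" by (simp add: algebra_simps)
  thus ?thesis by (simp add: zero_less_mult_iff)
qed

text \<open>When the segment crosses \<open>\<gamma> = 0\<close>, which is only possible for \<open>g0 = 0\<close>, split it at the
  crossing point and compare both ends with the Gumbel parameter there.\<close>

lemma gev_w_lipschitz_crossing:
  assumes c: "w_bounds c \<beta>" and g00: "g0 = 0" and r1: "admissible e x g1 m1 s1" and r2: "admissible e x g2 m2 s2"
    and gg: "\<not> 0 < g1*g2"
  shows "\<bar>gev_w g1 ((x - m1)/s1) - gev_w g2 ((x - m2)/s2)\<bar> \<le> 2*c*envelope x * norm ((g1,m1,s1) - (g2,m2,s2))"
proof -
  define N where "N = norm ((g1,m1,s1) - (g2,m2,s2))"
  obtain t where t: "0 \<le> t" "t \<le> 1" "g2 + t*(g1 - g2) = 0" using segment_zero_of_not_same_sign[OF gg] .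
  define ms where "ms = m2 + t*(m1 - m2)"
  define ss where "ss = s2 + t*(s1 - s2)"
  have rs: "admissible e x 0 ms ss" using admissible_segment[OF r1 r2 t(1,2)] t(3) by (simp add: ms_def ss_def)
  have d1: "\<bar>gev_w g1 ((x - m1)/s1) - gev_w 0 ((x - ms)/ss)\<bar> \<le> 2*c*envelope x * norm ((g1,m1,s1) - (0,ms,ss))"
    by (rule gev_w_lipschitz_zero_shape[OF c g00 r1 rs])
  have d2: "\<bar>gev_w g2 ((x - m2)/s2) - gev_w 0 ((x - ms)/ss)\<bar> \<le> 2*c*envelope x * norm ((g2,m2,s2) - (0,ms,ss))"
    by (rule gev_w_lipschitz_zero_shape[OF c g00 r2 rs])
  have e1: "(g1,m1,s1) - (0,ms,ss) = (1 - t) *\<^sub>R ((g1,m1,s1) - (g2,m2,s2))"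
    using t(3) by (simp add: ms_def ss_def algebra_simps)
  have e2: "(g2,m2,s2) - (0,ms,ss) = (-t) *\<^sub>R ((g1,m1,s1) - (g2,m2,s2))"
    using t(3) by (simp add: ms_def ss_def algebra_simps)
  have n1: "norm ((g1,m1,s1) - (0,ms,ss)) = (1 - t)*N" unfolding e1 norm_scaleR N_def using t by simp
  have n2: "norm ((g2,m2,s2) - (0,ms,ss)) = t*N" unfolding e2 norm_scaleR N_def using t by simp
  have "\<bar>gev_w g1 ((x - m1)/s1) - gev_w g2 ((x - m2)/s2)\<bar> \<le> \<bar>gev_w g1 ((x - m1)/s1) - gev_w 0 ((x - ms)/ss)\<bar> + \<bar>gev_w g2 ((x - m2)/s2) - gev_w 0 ((x - ms)/ss)\<bar>"
    by simp
  also have "\<dots> \<le> 2*c*envelope x * ((1 - t)*N) + 2*c*envelope x * (t*N)" using d1 d2 n1 n2 by simp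
  also have "\<dots> = 2*c*envelope x * N" by (simp add: algebra_simps)
  finally show ?thesis by (simp add: N_def)
qed

lemma gev_w_lipschitz:
  assumes c: "w_bounds c \<beta>" and r1: "admissible e x g1 m1 s1" and r2: "admissible e x g2 m2 s2"
  shows "\<bar>gev_w g1 ((x - m1)/s1) - gev_w g2 ((x - m2)/s2)\<bar> \<le> 2*c*envelope x * norm ((g1,m1,s1) - (g2,m2,s2))"
proof (cases "0 < g1*g2")
  case True
  have "0 \<le> c*envelope x * norm ((g1,m1,s1) - (g2,m2,s2))"
    using w_boundsD(1)[OF c r1] envelope_ge_1[of x] by simp
  thus ?thesis using gev_w_lipschitz_same_sign[OF c r1 r2 True] by linarith
next
  case False
  hence "g0 = 0" using admissible_same_sign[OF _ r1 r2] by blast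
  thus ?thesis using gev_w_lipschitz_crossing[OF c _ r1 r2 False] by blast
qed

lemma admissible_abs_ln_scale_diff:
  assumes r1: "admissible e x g1 m1 s1" and r2: "admissible e' x' g2 m2 s2"
  shows "\<bar>ln s1 - ln s2\<bar> \<le> norm ((g1,m1,s1) - (g2,m2,s2)) * (4/(3 * s0))"
proof -
  have s: "3 * s0/4 < s1" "3 * s0/4 < s2"
    using admissible_param_bounds(1)[OF r1] admissible_param_bounds(1)[OF r2] by auto
  hence sp: "0 < s1" "0 < s2" using s0 by linarith+
  have "\<bar>ln s1 - ln s2\<bar> \<le> \<bar>s1 - s2\<bar> * (1 / min s1 s2)" using abs_ln_diff_le[OF sp] by simp
  also have "\<dots> \<le> norm ((g1,m1,s1) - (g2,m2,s2)) * (4/(3 * s0))"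
  proof (rule mult_mono)
    show "\<bar>s1 - s2\<bar> \<le> norm ((g1,m1,s1) - (g2,m2,s2))"
      using abs_le_norm_triple[where a="g1 - g2" and b="m1 - m2" and c="s1 - s2"] by simp
    show "1 / min s1 s2 \<le> 4/(3 * s0)" using s s0 sp by (auto simp: min_def field_simps)
  qed (use s0 sp in auto)
  finally show ?thesis .
qed

lemma gev_loglik_lipschitz:
  assumes c: "w_bounds c \<beta>" and r1: "admissible e x g1 m1 s1" and r2: "admissible e x g2 m2 s2"
  shows "\<bar>gev_loglik (g1,m1,s1) x - gev_loglik (g2,m2,s2) x\<bar>
     \<le> (4/(3 * s0) + 2*c*c + c + 2*c*(\<bar>g0\<bar>+2)) * exp (\<beta> * max 0 (- w0 x)) * envelope x * norm ((g1,m1,s1) - (g2,m2,s2))"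
proof -
  define N where "N = norm ((g1,m1,s1) - (g2,m2,s2))"
  define w1 where "w1 = gev_w g1 ((x - m1)/s1)"
  define w2 where "w2 = gev_w g2 ((x - m2)/s2)"
  define E where "E = exp (\<beta> * max 0 (- w0 x))"
  have cp: "0 < c" and bp: "0 \<le> \<beta>" using w_boundsD(1,2)[OF c r1] by auto
  have E1: "1 \<le> E" using bp by (simp add: E_def)
  have P1: "1 \<le> envelope x" by (rule envelope_ge_1)
  have Nb: "\<bar>g1 - g2\<bar> \<le> N" "\<bar>s1 - s2\<bar> \<le> N" "0 \<le> N"
    using abs_le_norm_triple[where a="g1 - g2" and b="m1 - m2" and c="s1 - s2"] by (auto simp: N_def)
  have B1: "3 * s0/4 < s1" "0 < 1 + g1*((x - m1)/s1)" using admissible_param_bounds(1)[OF r1] admissible_q_lower(2)[OF r1] by auto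
  have B2: "3 * s0/4 < s2" "0 < 1 + g2*((x - m2)/s2)" using admissible_param_bounds(1)[OF r2] admissible_q_lower(2)[OF r2] by auto
  have sp: "0 < s1" "0 < s2" using B1 B2 s0 by linarith+
  have l1: "gev_loglik (g1,m1,s1) x = - ln s1 - exp (- w1) - (g1+1) * w1"
    using gev_loglik_eq[OF sp(1) B1(2)] by (simp add: w1_def)
  have l2: "gev_loglik (g2,m2,s2) x = - ln s2 - exp (- w2) - (g2+1) * w2"
    using gev_loglik_eq[OF sp(2) B2(2)] by (simp add: w2_def)
  have W: "\<bar>w1 - w2\<bar> \<le> 2*c*envelope x * N" using gev_w_lipschitz[OF c r1 r2] by (simp add: w1_def w2_def N_def)
  have aw1: "\<bar>w1\<bar> \<le> c * envelope x" using w_boundsD(3)[OF c r1] by (simp add: w1_def)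
  have ew: "max (exp (- w1)) (exp (- w2)) \<le> c * E"
    using w_boundsD(4)[OF c r1] w_boundsD(4)[OF c r2] by (simp add: w1_def w2_def E_def)
  have g2b: "\<bar>g2 + 1\<bar> \<le> \<bar>g0\<bar> + 2" using admissible_param_bounds(3)[OF r2] e0 by linarith
  have T1: "\<bar>ln s1 - ln s2\<bar> \<le> N * (4/(3 * s0))"
    using admissible_abs_ln_scale_diff[OF r1 r2] by (simp add: N_def)
  have T2: "\<bar>exp (- w1) - exp (- w2)\<bar> \<le> (c*E) * (2*c*envelope x * N)"
  proof -
    have "\<bar>exp (- w1) - exp (- w2)\<bar> \<le> max (exp (- w1)) (exp (- w2)) * \<bar>(- w1) - (- w2)\<bar>" by (rule abs_exp_diff_le)
    also have "\<dots> \<le> (c*E) * (2*c*envelope x * N)" using ew W cp E1 by (intro mult_mono) auto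
    finally show ?thesis .
  qed
  have T3: "\<bar>(g1+1)*w1 - (g2+1)*w2\<bar> \<le> N * (c*envelope x) + (\<bar>g0\<bar>+2) * (2*c*envelope x * N)"
  proof -
    have "(g1+1)*w1 - (g2+1)*w2 = (g1 - g2)*w1 + (g2+1)*(w1 - w2)" by (simp add: algebra_simps)
    hence "\<bar>(g1+1)*w1 - (g2+1)*w2\<bar> \<le> \<bar>g1 - g2\<bar>*\<bar>w1\<bar> + \<bar>g2+1\<bar>*\<bar>w1 - w2\<bar>"
      by (simp add: abs_mult[symmetric] abs_triangle_ineq)
    also have "\<dots> \<le> N * (c*envelope x) + (\<bar>g0\<bar>+2) * (2*c*envelope x * N)"
      using Nb aw1 g2b W by (intro add_mono mult_mono) auto
    finally show ?thesis .
  qed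
  have "\<bar>gev_loglik (g1,m1,s1) x - gev_loglik (g2,m2,s2) x\<bar>
     \<le> \<bar>ln s1 - ln s2\<bar> + \<bar>exp (- w1) - exp (- w2)\<bar> + \<bar>(g1+1)*w1 - (g2+1)*w2\<bar>"
    unfolding l1 l2 by linarith
  also have "\<dots> \<le> N * (4/(3 * s0)) + (c*E) * (2*c*envelope x * N) + (N * (c*envelope x) + (\<bar>g0\<bar>+2) * (2*c*envelope x * N))"
    using T1 T2 T3 by linarith
  also have "\<dots> \<le> (4/(3 * s0) + 2*c*c + c + 2*c*(\<bar>g0\<bar>+2)) * E * envelope x * N"
  proof -
    have ge: "X \<le> X * Y" if "0 \<le> X" "1 \<le> Y" for X Y :: real
      using mult_left_mono[OF that(2,1)] by simp
    have "1 \<le> E * envelope x" using E1 P1 mult_mono[of 1 E 1 "envelope x"] by simp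
    hence "N * (4/(3 * s0)) \<le> N * (4/(3 * s0)) * (E * envelope x)" using Nb s0 by (intro ge) auto
    moreover have "N * (c*envelope x) \<le> N * (c*envelope x) * E" using Nb cp P1 E1 by (intro ge) auto
    moreover have "(\<bar>g0\<bar>+2) * (2*c*envelope x * N) \<le> (\<bar>g0\<bar>+2) * (2*c*envelope x * N) * E"
      using Nb cp P1 E1 by (intro ge) auto
    moreover have "(4/(3 * s0) + 2*c*c + c + 2*c*(\<bar>g0\<bar>+2)) * E * envelope x * N
       = N * (4/(3 * s0)) * (E * envelope x) + (c*E) * (2*c*envelope x * N) + N * (c*envelope x) * E
          + (\<bar>g0\<bar>+2) * (2*c*envelope x * N) * E" by (simp add: algebra_simps)
    ultimately show ?thesis by linarith
  qed
  finally show ?thesis by (simp add: E_def N_def)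
qed

lemma gev_loglik_lipschitz_exp:
  obtains K a b where "0 < K" "0 < a" "a < 1/2" "0 < b"
    "\<And>e x g1 m1 s1 g2 m2 s2. admissible e x g1 m1 s1 \<Longrightarrow> admissible e x g2 m2 s2 \<Longrightarrow>
       \<bar>gev_loglik (g1,m1,s1) x - gev_loglik (g2,m2,s2) x\<bar>
         \<le> K * (exp (a * w0 x) + exp (- b * w0 x)) * norm ((g1,m1,s1) - (g2,m2,s2))"
proof -
  obtain c \<beta> where c: "w_bounds c \<beta>" using w_bounds_exist by blast
  have cp: "0 < c" and bp: "0 \<le> \<beta>" using c by (auto simp: w_bounds_def)
  define K0 where "K0 = 4/(3 * s0) + 2*c*c + c + 2*c*(\<bar>g0\<bar> + 2)"
  define a where "a = (1 + 2*max 0 (- g0))/4"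
  define b where "b = \<beta> + \<bar>g0\<bar> + 1"
  have K0p: "0 < K0" using cp s0 by (simp add: K0_def add_pos_nonneg)
  have ap: "0 < a" "a < 1/2" using g0 by (auto simp: a_def)
  have bpos: "0 < b" using bp by (simp add: b_def)
  define K where "K = K0 * (4/a\<^sup>2 + 5)"
  have Kp: "0 < K" using K0p ap by (simp add: K_def add_pos_nonneg)
  have "\<bar>gev_loglik (g1,m1,s1) x - gev_loglik (g2,m2,s2) x\<bar>
      \<le> K * (exp (a * w0 x) + exp (- b * w0 x)) * norm ((g1,m1,s1) - (g2,m2,s2))"
    if r1: "admissible e x g1 m1 s1" and r2: "admissible e x g2 m2 s2" for e x g1 m1 s1 g2 m2 s2
  proof -
    define N where "N = norm ((g1,m1,s1) - (g2,m2,s2))"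
    have "\<bar>gev_loglik (g1,m1,s1) x - gev_loglik (g2,m2,s2) x\<bar>
        \<le> K0 * (exp (\<beta> * max 0 (- w0 x)) * envelope x) * N"
      using gev_loglik_lipschitz[OF c r1 r2] by (simp add: K0_def N_def mult.assoc)
    also have "\<dots> \<le> K0 * ((4/a\<^sup>2 + 5) * (exp (a * w0 x) + exp (- b * w0 x))) * N"
      using envelope_le_exp_sum[OF g0 bp, of "w0 x"] K0p
      by (intro mult_right_mono mult_left_mono) (auto simp: envelope_def a_def b_def N_def)
    finally show ?thesis by (simp add: K_def N_def)
  qed
  from that[OF Kp ap bpos this] show thesis .
qed

lemma gev_u_powr_eq_exp_w0:
  assumes "admissible e x g m s"
  shows "gev_u (g0,m0,s0) x powr p = exp (- p * w0 x)"
  using gev_u_eq_exp_gev_w[OF s0 admissible_q0_pos[OF assms]] by (simp add: w0_def powr_def)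

lemma admissible_of_common_support:
  assumes "ball (g0,m0,s0) (2*e0) \<subseteq> \<Theta>" "0 < e" "e < e0"
    and "x \<in> common_support \<Theta> (g0,m0,s0) (2*e)" "(g,m,s) \<in> par_nbhd \<Theta> (g0,m0,s0) e"
  shows "admissible e x g m s"
proof -
  have "x \<in> gev_support \<theta>'" if "norm (\<theta>' - (g0,m0,s0)) < 2*e" for \<theta>'
  proof -
    have "\<theta>' \<in> \<Theta>" using assms(1,3) that by (auto simp: dist_norm norm_minus_commute)
    hence "\<theta>' \<in> par_nbhd \<Theta> (g0,m0,s0) (2*e)" using that by (simp add: par_nbhd_def)
    thus ?thesis using assms(4) by (auto simp: common_support_def)
  qed
  thus ?thesis using assms(2,3,5) by (auto simp: admissible_def par_nbhd_def)
qed

lemma gev_loglik_lipschitz_on_common_support: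
  assumes "ball (g0,m0,s0) (2*e0) \<subseteq> \<Theta>"
  obtains K a b where "0 < a" "a < 1/2" "0 < b"
    "\<And>\<epsilon> x \<theta>1 \<theta>2. 0 < \<epsilon> \<Longrightarrow> \<epsilon> < e0 \<Longrightarrow> x \<in> common_support \<Theta> (g0,m0,s0) (2*\<epsilon>) \<Longrightarrow>
       \<theta>1 \<in> par_nbhd \<Theta> (g0,m0,s0) \<epsilon> \<Longrightarrow> \<theta>2 \<in> par_nbhd \<Theta> (g0,m0,s0) \<epsilon> \<Longrightarrow>
       \<bar>gev_loglik \<theta>1 x - gev_loglik \<theta>2 x\<bar>
         \<le> K * (gev_u (g0,m0,s0) x powr (- a) + gev_u (g0,m0,s0) x powr b) * norm (\<theta>1 - \<theta>2)"
proof -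
  obtain K a b where Kab: "0 < a" "a < 1/2" "0 < b"
    and lip: "\<And>e x g1 m1 s1 g2 m2 s2. admissible e x g1 m1 s1 \<Longrightarrow> admissible e x g2 m2 s2 \<Longrightarrow>
       \<bar>gev_loglik (g1,m1,s1) x - gev_loglik (g2,m2,s2) x\<bar>
         \<le> K * (exp (a * w0 x) + exp (- b * w0 x)) * norm ((g1,m1,s1) - (g2,m2,s2))"
    using gev_loglik_lipschitz_exp by metis
  have "\<bar>gev_loglik \<theta>1 x - gev_loglik \<theta>2 x\<bar>
      \<le> K * (gev_u (g0,m0,s0) x powr (- a) + gev_u (g0,m0,s0) x powr b) * norm (\<theta>1 - \<theta>2)"
    if "0 < \<epsilon>" "\<epsilon> < e0" "x \<in> common_support \<Theta> (g0,m0,s0) (2*\<epsilon>)"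
      "\<theta>1 \<in> par_nbhd \<Theta> (g0,m0,s0) \<epsilon>" "\<theta>2 \<in> par_nbhd \<Theta> (g0,m0,s0) \<epsilon>" for \<epsilon> x \<theta>1 \<theta>2
  proof -
    obtain g1 m1 s1 g2 m2 s2 where \<theta>: "\<theta>1 = (g1,m1,s1)" "\<theta>2 = (g2,m2,s2)" by (metis prod_cases3)
    have "admissible \<epsilon> x g1 m1 s1" "admissible \<epsilon> x g2 m2 s2"
      using that assms by (auto intro: admissible_of_common_support simp: \<theta>)
    thus ?thesis using lip by (simp add: \<theta> gev_u_powr_eq_exp_w0)
  qed
  with Kab that show thesis by blast
qed

end

lemma open_Theta_full: "open Theta_full"
  unfolding Theta_full_def by (intro open_Times) auto

theorem lemmaE2:
  fixes \<Theta> :: "(real \<times> real \<times> real) set" and \<theta>0 :: "real \<times> real \<times> real"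
  assumes "\<Theta> = Theta_full \<or> (compact \<Theta> \<and> \<Theta> \<subseteq> Theta_full \<and> \<theta>0 \<in> interior \<Theta>)"
    and "\<theta>0 \<in> \<Theta>"
  shows "\<exists>ldot :: real \<Rightarrow> real. \<exists>\<epsilon>0 > 0.
           ldot \<in> borel_measurable (gev_measure \<theta>0) \<and>
           integrable (gev_measure \<theta>0) (\<lambda>x. (ldot x)\<^sup>2) \<and>
           (\<forall>\<epsilon>. 0 < \<epsilon> \<and> \<epsilon> < \<epsilon>0 \<longrightarrow>
              (\<forall>x \<in> common_support \<Theta> \<theta>0 (2 * \<epsilon>).
                 \<forall>\<theta>1 \<in> par_nbhd \<Theta> \<theta>0 \<epsilon>. \<forall>\<theta>2 \<in> par_nbhd \<Theta> \<theta>0 \<epsilon>.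
                   \<bar>gev_loglik \<theta>1 x - gev_loglik \<theta>2 x\<bar> \<le> ldot x * norm (\<theta>1 - \<theta>2)))"
proof -
  obtain g0 m0 s0 where th0: "\<theta>0 = (g0,m0,s0)" by (metis prod_cases3)
  have "\<theta>0 \<in> Theta_full" using assms by auto
  hence s0: "0 < s0" and g0: "-1/2 < g0" by (auto simp: Theta_full_def th0)
  have "\<theta>0 \<in> interior \<Theta>" using assms open_Theta_full interior_open by auto
  then obtain r where r: "0 < r" "ball \<theta>0 r \<subseteq> \<Theta>" by (meson mem_interior)
  define e0 where "e0 = min (r/2) (min 1 (min (s0/4) (if g0 = 0 then 1 else \<bar>g0\<bar>/2)))"
  have e0_pos: "0 < e0" and ball_e0: "ball \<theta>0 (2*e0) \<subseteq> \<Theta>" using r s0 by (auto simp: e0_def)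
  interpret gev_local g0 m0 s0 e0
    by unfold_locales (use s0 g0 e0_pos in \<open>auto simp: e0_def\<close>)
  obtain K a b where Kab: "0 < a" "a < 1/2" "0 < b"
    and lip: "\<And>\<epsilon> x \<theta>1 \<theta>2. 0 < \<epsilon> \<Longrightarrow> \<epsilon> < e0 \<Longrightarrow> x \<in> common_support \<Theta> \<theta>0 (2*\<epsilon>) \<Longrightarrow>
       \<theta>1 \<in> par_nbhd \<Theta> \<theta>0 \<epsilon> \<Longrightarrow> \<theta>2 \<in> par_nbhd \<Theta> \<theta>0 \<epsilon> \<Longrightarrow>
       \<bar>gev_loglik \<theta>1 x - gev_loglik \<theta>2 x\<bar>
         \<le> K * (gev_u \<theta>0 x powr (- a) + gev_u \<theta>0 x powr b) * norm (\<theta>1 - \<theta>2)"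
    using gev_loglik_lipschitz_on_common_support ball_e0 unfolding th0 by metis
  define ldot where "ldot x = K * (gev_u \<theta>0 x powr (- a) + gev_u \<theta>0 x powr b)" for x
  have "ldot \<in> borel_measurable borel" unfolding ldot_def th0 using borel_measurable_gev_u by measurable
  hence "ldot \<in> borel_measurable (gev_measure \<theta>0)" by (simp add: gev_measure_def)
  moreover have "integrable (gev_measure \<theta>0) (\<lambda>x. (ldot x)\<^sup>2)"
    unfolding th0 ldot_def by (rule integrable_gev_u_powr_sq[OF s0 Kab])
  ultimately show ?thesis using e0_pos lip by (intro exI[of _ ldot] exI[of _ e0]) (auto simp: ldot_def)
qed

end
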